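(* Let $p$ be a prime and $m\ge 2$, and let $\mathcal{G}$ be the set of all groups isomorphic to either $H_1=\mathbb{Z}_p^{m-1}$ or $H_2=\mathbb{Z}_p^m$. Any algorithm that, for $G\in\mathcal{G}$ of unknown size, decides with probability at least $2/3$ whether $G$ is isomorphic to $H_1$ or to $H_2$ must access an oracle that returns uniformly random elements of $G$ and the Cayley table of $G$ at least $\Omega(p^{m/2-1/2}/\log p)=\Omega(|G|^{1/2}/(\sqrt{p}\log p))$ times.
   Context: The element sets of the groups in $\mathcal{G}$ are subsets of a fixed countable set. Access model (partially specified model): the algorithm does not know $|G|$; it can obtain independent uniformly random elements of $G$ from an oracle and query the Cayley table on elements observed so far; each oracle call and each table query counts as one access. *)

theory Defs
  imports "HOL-Algebra.Elementary_Groups" "HOL-Algebra.Product_Groups"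
          "HOL-Probability.Probability"
begin

definition Zp_pow :: "nat \<Rightarrow> nat \<Rightarrow> (nat \<Rightarrow> int) monoid" where
  "Zp_pow p k = product_group {..<k} (\<lambda>_. integer_mod_group p)"

definition group_class :: "nat \<Rightarrow> nat \<Rightarrow> nat monoid set" where
  "group_class p m = {G. group G \<and> (G \<cong> Zp_pow p (m - 1) \<or> G \<cong> Zp_pow p m)}"

text \<open>Actions of an algorithm: draw a uniformly random element (one access),
  query the Cayley table on the i-th and j-th elements observed so far (one access),
  or halt with an answer (True = "G is isomorphic to Z_p^m").\<close>
datatype action = Sample | Mult nat nat | Answer bool

text \<open>A randomized algorithm: given the full transcript so far (its own past actions and
  the oracle's responses), it chooses a distribution over the next action.
  (Behavioural strategies with perfect recall; equivalent to arbitrary private randomness.)\<close>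
type_synonym algorithm = "(action \<times> nat) list \<Rightarrow> action pmf"

text \<open>Response to a Cayley table query: product of the i-th and j-th observed elements.
  Queries on indices not yet observed return a fixed dummy value (carrying no information).\<close>
definition table_resp :: "nat monoid \<Rightarrow> (action \<times> nat) list \<Rightarrow> nat \<Rightarrow> nat \<Rightarrow> nat" where
  "table_resp G h i j =
     (if i < length h \<and> j < length h then snd (h ! i) \<otimes>\<^bsub>G\<^esub> snd (h ! j) else 0)"

primrec exec :: "nat monoid \<Rightarrow> algorithm \<Rightarrow> nat \<Rightarrow> (action \<times> nat) list \<Rightarrow> bool option pmf" where
  "exec G A 0 h =
     A h \<bind> (\<lambda>a. case a of Answer b \<Rightarrow> return_pmf (Some b) | _ \<Rightarrow> return_pmf None)"
| "exec G A (Suc n) h =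
     A h \<bind> (\<lambda>a. case a of
        Answer b \<Rightarrow> return_pmf (Some b)
      | Sample \<Rightarrow> pmf_of_set (carrier G) \<bind> (\<lambda>x. exec G A n (h @ [(Sample, x)]))
      | Mult i j \<Rightarrow> exec G A n (h @ [(Mult i j, table_resp G h i j)]))"

definition decides_with :: "nat \<Rightarrow> nat \<Rightarrow> algorithm \<Rightarrow> nat \<Rightarrow> bool" where
  "decides_with p m A q \<longleftrightarrow>
     (\<forall>G \<in> group_class p m.
        measure_pmf.prob (exec G A q []) {Some (G \<cong> Zp_pow p m)} \<ge> 2/3)"

end

theory Submission
  imports Defs
begin

(* Run the algorithm on Z_p^k with its elements relabelled by a uniformly random injection into
   {1..M}.  Every element the algorithm sees is a formal Z_p-combination of its samples, so the
   probability of a transcript is the average over relabellings of the fraction of sample values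
   consistent with it.  An idealised oracle that gives each formally new combination a fresh
   random label produces transcript probabilities independent of k.  The two oracles differ only
   when two formally distinct combinations take the same value, which for a fixed pair has
   probability p^-k; so after q accesses their outcome probabilities differ by at most q^2/p^k,
   and telling k = m - 1 from k = m with advantage 1/3 forces q^2 \<ge> p^(m-1)/6. *)

type_synonym transcript = "(action \<times> nat) list"

lemma measure_bind_pmf:
  "measure_pmf.prob (bind_pmf M f) X = measure_pmf.expectation M (\<lambda>x. measure_pmf.prob (f x) X)"
  unfolding measure_pmf_bind
  by (rule measure_pmf.measure_bind[where N="count_space UNIV"])
     (auto simp: space_subprob_algebra intro!: prob_space_imp_subprob_space measure_pmf.prob_space_axioms)

lemma integrable_pmf_bounded:
  fixes f :: "'a \<Rightarrow> real"
  assumes "\<And>x. \<bar>f x\<bar> \<le> C"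
  shows "integrable (measure_pmf M) f"
  by (rule measure_pmf.integrable_const_bound[where B=C]) (use assms in auto)

lemma abs_expectation_le:
  fixes f :: "'a \<Rightarrow> real"
  assumes "\<And>x. \<bar>f x\<bar> \<le> C"
  shows "\<bar>measure_pmf.expectation M f\<bar> \<le> C"
proof -
  have "measure_pmf.expectation M (\<lambda>x. \<bar>f x\<bar>) \<le> C"
    by (rule measure_pmf.integral_le_const) (use assms in \<open>auto intro!: integrable_pmf_bounded\<close>)
  then show ?thesis using integral_abs_bound[of "measure_pmf M" f] by linarith
qed

fun outcome :: "action \<Rightarrow> bool option" where
  "outcome (Answer b) = Some b"
| "outcome _ = None"

lemma exec_0: "exec G A 0 h = map_pmf outcome (A h)"
  unfolding map_pmf_def by (auto intro: bind_pmf_cong split: action.split)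

definition mass_step :: "(transcript \<Rightarrow> real) \<Rightarrow> bool option set \<Rightarrow> nat set \<Rightarrow> (transcript \<Rightarrow> real)
    \<Rightarrow> transcript \<Rightarrow> action \<Rightarrow> real" where
  "mass_step \<Lambda> Ob L R h a =
     (if outcome a = None then \<Sum>l\<in>L. R (h @ [(a, l)]) else \<Lambda> h * indicator Ob (outcome a))"

(* The weighted probability that the run from transcript h, with at most n further accesses,
   ends with an outcome in Ob.  Oracle answers range over L, and \<Lambda> weighs transcripts like the
   probability that the oracle gives the recorded answers: \<Lambda> (h @ [(a, l)]) / \<Lambda> h is the
   chance of answer l to action a. *)
primrec outcome_mass :: "algorithm \<Rightarrow> nat set \<Rightarrow> (transcript \<Rightarrow> real) \<Rightarrow> bool option set
    \<Rightarrow> nat \<Rightarrow> transcript \<Rightarrow> real" where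
  "outcome_mass A L \<Lambda> Ob 0 h = \<Lambda> h * measure_pmf.prob (map_pmf outcome (A h)) Ob"
| "outcome_mass A L \<Lambda> Ob (Suc n) h =
     measure_pmf.expectation (A h) (mass_step \<Lambda> Ob L (outcome_mass A L \<Lambda> Ob n) h)"

lemma abs_mass_step_le:
  assumes "\<bar>\<Lambda> h\<bar> \<le> C" and "\<And>h'. \<bar>R h'\<bar> \<le> C"
  shows "\<bar>mass_step \<Lambda> Ob L R h a\<bar> \<le> (real (card L) + 1) * C"
proof -
  have "\<bar>\<Sum>l\<in>L. R (h @ [(a, l)])\<bar> \<le> (\<Sum>l\<in>L. C)"
    by (rule order_trans[OF sum_abs sum_mono]) (rule assms(2))
  moreover have "0 \<le> C" using assms(1) by linarith
  moreover have "\<bar>\<Lambda> h * indicator Ob (outcome a)\<bar> \<le> C"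
    using assms(1) \<open>0 \<le> C\<close> by (simp add: indicator_def abs_mult)
  ultimately show ?thesis by (simp add: mass_step_def algebra_simps add_increasing2)
qed

lemma abs_le_mass_bound:
  assumes "\<And>h. \<bar>\<Lambda> h\<bar> \<le> B"
  shows "\<bar>\<Lambda> h\<bar> \<le> B * (real (card L) + 1) ^ n"
proof -
  have "0 \<le> B" using assms[of h] by linarith
  then have "B \<le> B * (real (card L) + 1) ^ n"
    by (simp add: mult_le_cancel_left1)
  then show ?thesis using assms[of h] by linarith
qed

lemma abs_outcome_mass_le:
  assumes "\<And>h. \<bar>\<Lambda> h\<bar> \<le> B"
  shows "\<bar>outcome_mass A L \<Lambda> Ob n h\<bar> \<le> B * (real (card L) + 1) ^ n"
proof (induction n arbitrary: h)
  case 0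
  have "\<bar>\<Lambda> h\<bar> * measure_pmf.prob (map_pmf outcome (A h)) Ob \<le> \<bar>\<Lambda> h\<bar> * 1"
    by (intro mult_left_mono) auto
  then show ?case using assms[of h] by (simp add: abs_mult)
next
  case (Suc n)
  have "\<bar>mass_step \<Lambda> Ob L (outcome_mass A L \<Lambda> Ob n) h a\<bar>
      \<le> (real (card L) + 1) * (B * (real (card L) + 1) ^ n)" for a
    by (rule abs_mass_step_le) (rule abs_le_mass_bound[OF assms], rule Suc.IH)
  then show ?case
    by (simp add: abs_expectation_le algebra_simps)
qed

lemma integrable_mass_step:
  assumes "\<And>h. \<bar>\<Lambda> h\<bar> \<le> B"
  shows "integrable (measure_pmf M) (mass_step \<Lambda> Ob L (outcome_mass A L \<Lambda> Ob n) h)"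
proof (rule integrable_pmf_bounded)
  fix a
  show "\<bar>mass_step \<Lambda> Ob L (outcome_mass A L \<Lambda> Ob n) h a\<bar> \<le> (real (card L) + 1) * (B * (real (card L) + 1) ^ n)"
    by (rule abs_mass_step_le[OF abs_le_mass_bound[OF assms] abs_outcome_mass_le[OF assms]])
qed

lemma outcome_mass_sum:
  assumes "finite I" and "\<And>i h. i \<in> I \<Longrightarrow> \<bar>\<Lambda> i h\<bar> \<le> B"
  shows "outcome_mass A L (\<lambda>h. \<Sum>i\<in>I. w i * \<Lambda> i h) Ob n h
       = (\<Sum>i\<in>I. w i * outcome_mass A L (\<Lambda> i) Ob n h)"
proof (induction n arbitrary: h)
  case 0
  show ?case by (simp add: sum_distrib_right mult.assoc)
next
  case (Suc n)
  have "mass_step (\<lambda>h. \<Sum>i\<in>I. w i * \<Lambda> i h) Ob L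
          (outcome_mass A L (\<lambda>h. \<Sum>i\<in>I. w i * \<Lambda> i h) Ob n) h
      = (\<lambda>a. \<Sum>i\<in>I. w i * mass_step (\<Lambda> i) Ob L (outcome_mass A L (\<Lambda> i) Ob n) h a)"
  proof
    fix a
    show "mass_step (\<lambda>h. \<Sum>i\<in>I. w i * \<Lambda> i h) Ob L
          (outcome_mass A L (\<lambda>h. \<Sum>i\<in>I. w i * \<Lambda> i h) Ob n) h a
      = (\<Sum>i\<in>I. w i * mass_step (\<Lambda> i) Ob L (outcome_mass A L (\<Lambda> i) Ob n) h a)"
      by (cases "outcome a")
         (simp_all add: mass_step_def Suc.IH sum_distrib_left sum_distrib_right mult.assoc sum.swap[of _ L I])
  qed
  moreover have "integrable (measure_pmf (A h))
      (\<lambda>a. w i * mass_step (\<Lambda> i) Ob L (outcome_mass A L (\<Lambda> i) Ob n) h a)" if "i \<in> I" for i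
    using assms(2)[OF that] by (intro integrable_mult_right integrable_mass_step)
  ultimately show ?case
    using assms(1) by (simp add: Bochner_Integration.integral_sum)
qed

lemma outcome_mass_scale:
  assumes "\<And>h. \<bar>\<Lambda> h\<bar> \<le> B"
  shows "outcome_mass A L (\<lambda>h. c * \<Lambda> h) Ob n h = c * outcome_mass A L \<Lambda> Ob n h"
  using outcome_mass_sum[of "{()}" "\<lambda>_. \<Lambda>" B A L "\<lambda>_. c"] assms by simp

lemma outcome_mass_zero: "outcome_mass A L (\<lambda>_. 0) Ob n h = 0"
  using outcome_mass_scale[of "\<lambda>_. 0" 0 A L 0 Ob n h] by simp

lemma outcome_mass_add:
  assumes "\<And>h. \<bar>\<Lambda>\<^sub>1 h\<bar> \<le> B" and "\<And>h. \<bar>\<Lambda>\<^sub>2 h\<bar> \<le> B"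
  shows "outcome_mass A L (\<lambda>h. \<Lambda>\<^sub>1 h + \<Lambda>\<^sub>2 h) Ob n h
       = outcome_mass A L \<Lambda>\<^sub>1 Ob n h + outcome_mass A L \<Lambda>\<^sub>2 Ob n h"
proof -
  have "\<bar>(if i then \<Lambda>\<^sub>2 else \<Lambda>\<^sub>1) h\<bar> \<le> B" if "i \<in> UNIV" for i h
    using assms by simp
  from outcome_mass_sum[of UNIV "\<lambda>i. if i then \<Lambda>\<^sub>2 else \<Lambda>\<^sub>1" B A L "\<lambda>_. 1" Ob n h, OF _ this]
  show ?thesis
    by (simp add: UNIV_bool)
qed

lemma outcome_mass_mono:
  assumes "\<And>h. \<bar>\<Lambda>\<^sub>1 h\<bar> \<le> B" and "\<And>h. \<bar>\<Lambda>\<^sub>2 h\<bar> \<le> B"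
    and "\<And>h'. length h' \<le> length h + n \<Longrightarrow> \<Lambda>\<^sub>1 h' \<le> \<Lambda>\<^sub>2 h'"
  shows "outcome_mass A L \<Lambda>\<^sub>1 Ob n h \<le> outcome_mass A L \<Lambda>\<^sub>2 Ob n h"
  using assms(3)
proof (induction n arbitrary: h)
  case 0
  then show ?case by (simp add: mult_right_mono)
next
  case (Suc n)
  have "mass_step \<Lambda>\<^sub>1 Ob L (outcome_mass A L \<Lambda>\<^sub>1 Ob n) h a
      \<le> mass_step \<Lambda>\<^sub>2 Ob L (outcome_mass A L \<Lambda>\<^sub>2 Ob n) h a" for a
    using Suc.prems[of h] Suc.IH[of "h @ [(a, _)]"] Suc.prems
    by (auto simp: mass_step_def intro!: sum_mono mult_right_mono)
  then show ?case
    by (simp add: integral_mono integrable_mass_step[OF assms(1)] integrable_mass_step[OF assms(2)])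
qed

lemma outcome_mass_mono_set:
  assumes "\<And>h. \<bar>\<Lambda> h\<bar> \<le> B" and "\<And>h'. length h' \<le> length h + n \<Longrightarrow> 0 \<le> \<Lambda> h'"
    and "Ob \<subseteq> Ob'"
  shows "outcome_mass A L \<Lambda> Ob n h \<le> outcome_mass A L \<Lambda> Ob' n h"
  using assms(2)
proof (induction n arbitrary: h)
  case 0
  then show ?case
    using assms(3) by (auto intro!: mult_left_mono measure_pmf.finite_measure_mono)
next
  case (Suc n)
  have "mass_step \<Lambda> Ob L (outcome_mass A L \<Lambda> Ob n) h a
      \<le> mass_step \<Lambda> Ob' L (outcome_mass A L \<Lambda> Ob' n) h a" for a
    using Suc.prems[of h] Suc.IH[of "h @ [(a, _)]"] Suc.prems assms(3)
    by (auto simp: mass_step_def indicator_def intro!: sum_mono)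
  then show ?case
    by (simp add: integral_mono integrable_mass_step[OF assms(1)])
qed

lemma outcome_mass_UNIV:
  assumes "\<And>h' a. length h' < length h + n \<Longrightarrow> outcome a = None \<Longrightarrow>
      (\<Sum>l\<in>L. \<Lambda> (h' @ [(a, l)])) = \<Lambda> h'"
  shows "outcome_mass A L \<Lambda> UNIV n h = \<Lambda> h"
  using assms
proof (induction n arbitrary: h)
  case 0
  then show ?case by simp
next
  case (Suc n)
  have "outcome_mass A L \<Lambda> UNIV n (h @ [(a, l)]) = \<Lambda> (h @ [(a, l)])" for a l
    by (rule Suc.IH) (use Suc.prems in auto)
  then have "mass_step \<Lambda> UNIV L (outcome_mass A L \<Lambda> UNIV n) h = (\<lambda>_. \<Lambda> h)"
    using Suc.prems[of h] by (auto simp: mass_step_def fun_eq_iff)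
  then show ?case by simp
qed

(* Products involving a non-element are 0, a label that no relabelling below uses. *)
definition relabel :: "('a \<Rightarrow> nat) \<Rightarrow> ('a, 'm) monoid_scheme \<Rightarrow> nat monoid" where
  "relabel \<sigma> G = \<lparr>carrier = \<sigma> ` carrier G,
     monoid.mult = (\<lambda>x y. if x \<in> \<sigma> ` carrier G \<and> y \<in> \<sigma> ` carrier G
        then \<sigma> (inv_into (carrier G) \<sigma> x \<otimes>\<^bsub>G\<^esub> inv_into (carrier G) \<sigma> y) else 0),
     one = \<sigma> \<one>\<^bsub>G\<^esub>\<rparr>"

lemma relabel_hom:
  assumes "inj_on \<sigma> (carrier G)"
  shows "\<sigma> \<in> hom G (relabel \<sigma> G)"
  using assms by (intro homI) (auto simp: relabel_def)

lemma group_relabel: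
  assumes "group G" and "inj_on \<sigma> (carrier G)"
  shows "group (relabel \<sigma> G)"
proof -
  have "relabel \<sigma> G\<lparr>carrier := \<sigma> ` carrier G, one := \<sigma> \<one>\<^bsub>G\<^esub>\<rparr> = relabel \<sigma> G"
    by (simp add: relabel_def)
  then show ?thesis
    using group.hom_imp_img_group[OF assms(1) relabel_hom[OF assms(2)]] by simp
qed

lemma relabel_iso:
  assumes "group G" and "inj_on \<sigma> (carrier G)"
  shows "relabel \<sigma> G \<cong> G"
proof -
  have "\<sigma> \<in> iso G (relabel \<sigma> G)"
    using relabel_hom[OF assms(2)] assms(2) by (auto simp: iso_def bij_betw_def relabel_def)
  then show ?thesis by (rule group.iso_sym[OF assms(1) is_isoI])
qed

lemma carrier_Zp_pow: "0 < p \<Longrightarrow> carrier (Zp_pow p k) = {..<k} \<rightarrow>\<^sub>E {0..<int p}"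
  by (simp add: Zp_pow_def carrier_integer_mod_group)

lemma finite_carrier_Zp_pow: "0 < p \<Longrightarrow> finite (carrier (Zp_pow p k))"
  by (simp add: carrier_Zp_pow finite_PiE)

lemma card_carrier_Zp_pow: "0 < p \<Longrightarrow> card (carrier (Zp_pow p k)) = p ^ k"
  by (simp add: carrier_Zp_pow card_PiE)

lemma mult_Zp_pow: "x \<otimes>\<^bsub>Zp_pow p k\<^esub> y = (\<lambda>t\<in>{..<k}. (x t + y t) mod int p)"
  by (simp add: Zp_pow_def)

lemma group_Zp_pow: "group (Zp_pow p k)"
  by (simp add: Zp_pow_def)

(* Transcript entries as formal combinations of the samples: coefficient j belongs to the j-th
   sample, and None marks entries that carry no group element. *)
fun formal_term :: "nat \<Rightarrow> (nat \<Rightarrow> int) option list \<Rightarrow> nat \<Rightarrow> action \<Rightarrow> (nat \<Rightarrow> int) option" where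
  "formal_term p fs s Sample = Some (\<lambda>j. if j = s then 1 else 0)"
| "formal_term p fs s (Mult i j) =
     (if i < length fs \<and> j < length fs then
        (case (fs ! i, fs ! j) of
          (Some f, Some g) \<Rightarrow> Some (\<lambda>t. (f t + g t) mod int p)
        | _ \<Rightarrow> None)
      else None)"
| "formal_term p fs s (Answer b) = None"

definition formal_step ::
    "nat \<Rightarrow> (nat \<Rightarrow> int) option list \<times> nat \<Rightarrow> action \<Rightarrow> (nat \<Rightarrow> int) option list \<times> nat" where
  "formal_step p = (\<lambda>(fs, s) a. (fs @ [formal_term p fs s a], if a = Sample then Suc s else s))"

definition formal_terms :: "nat \<Rightarrow> transcript \<Rightarrow> (nat \<Rightarrow> int) option list" where
  "formal_terms p h = fst (foldl (formal_step p) ([], 0) (map fst h))"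

definition num_samples :: "transcript \<Rightarrow> nat" where
  "num_samples h = length (filter (\<lambda>e. fst e = Sample) h)"

lemma num_samples_Nil [simp]: "num_samples [] = 0"
  by (simp add: num_samples_def)

lemma num_samples_snoc [simp]:
  "num_samples (h @ [(a, l)]) = (if a = Sample then Suc (num_samples h) else num_samples h)"
  by (simp add: num_samples_def)

lemma snd_foldl_formal_step: "snd (foldl (formal_step p) ([], 0) (map fst h)) = num_samples h"
  by (induction h rule: rev_induct) (auto simp: formal_step_def split: prod.splits)

lemma formal_terms_Nil [simp]: "formal_terms p [] = []"
  by (simp add: formal_terms_def)

lemma formal_terms_snoc [simp]:
  "formal_terms p (h @ [(a, l)]) = formal_terms p h @ [formal_term p (formal_terms p h) (num_samples h) a]"
proof -
  obtain fs s where st: "foldl (formal_step p) ([], 0) (map fst h) = (fs, s)"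
    by fastforce
  moreover have "s = num_samples h"
    using st snd_foldl_formal_step[of p h] by simp
  ultimately show ?thesis by (simp add: formal_terms_def formal_step_def)
qed

lemma length_formal_terms [simp]: "length (formal_terms p h) = length h"
  by (induction h rule: rev_induct) auto

definition reduced_coeffs :: "nat \<Rightarrow> nat \<Rightarrow> (nat \<Rightarrow> int) \<Rightarrow> bool" where
  "reduced_coeffs p s f \<longleftrightarrow> (\<forall>j. 0 \<le> f j \<and> f j < int p) \<and> (\<forall>j\<ge>s. f j = 0)"

lemma reduced_formal_terms:
  assumes "1 < p" and "i < length h" and "formal_terms p h ! i = Some f"
  shows "reduced_coeffs p (num_samples h) f"
  using assms(2,3)
proof (induction h arbitrary: i f rule: rev_induct)
  case Nil
  then show ?case by simp
next
  case (snoc e h)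
  obtain a l where e: "e = (a, l)" by (cases e)
  show ?case
  proof (cases "i < length h")
    case True
    then have "reduced_coeffs p (num_samples h) f"
      using snoc by (simp add: e nth_append)
    then show ?thesis by (auto simp: e reduced_coeffs_def)
  next
    case False
    then have "formal_term p (formal_terms p h) (num_samples h) a = Some f"
      using snoc.prems by (simp add: e nth_append)
    then show ?thesis
      using assms(1) by (cases a) (auto simp: e reduced_coeffs_def split: if_splits option.splits dest!: snoc.IH)
  qed
qed

definition eval_term :: "nat \<Rightarrow> nat \<Rightarrow> nat \<Rightarrow> (nat \<Rightarrow> int) \<Rightarrow> (nat \<Rightarrow> nat \<Rightarrow> int) \<Rightarrow> nat \<Rightarrow> int" where
  "eval_term p k s f xs = (\<lambda>t\<in>{..<k}. (\<Sum>j<s. f j * xs j t) mod int p)"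

lemma eval_term_in_carrier: "0 < p \<Longrightarrow> eval_term p k s f xs \<in> carrier (Zp_pow p k)"
  by (simp add: carrier_Zp_pow eval_term_def)

lemma eval_term_extend:
  assumes "reduced_coeffs p s f" and "s \<le> s'"
  shows "eval_term p k s' f xs = eval_term p k s f xs"
proof -
  have "(\<Sum>j<s'. f j * xs j t) = (\<Sum>j<s. f j * xs j t)" for t
    by (rule sum.mono_neutral_right) (use assms in \<open>auto simp: reduced_coeffs_def\<close>)
  then show ?thesis by (simp add: eval_term_def)
qed

lemma eval_term_cong: "(\<And>j. j < s \<Longrightarrow> xs j = ys j) \<Longrightarrow> eval_term p k s f xs = eval_term p k s f ys"
  by (simp add: eval_term_def)

lemma eval_term_unit:
  assumes "0 < p" and "xs s \<in> carrier (Zp_pow p k)"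
  shows "eval_term p k (Suc s) (\<lambda>j. if j = s then 1 else 0) xs = xs s"
  using assms by (auto simp: eval_term_def carrier_Zp_pow PiE_iff extensional_def if_distrib
      fun_eq_iff cong: if_cong)

lemma eval_term_add:
  "eval_term p k s (\<lambda>t. (f t + g t) mod int p) xs = eval_term p k s f xs \<otimes>\<^bsub>Zp_pow p k\<^esub> eval_term p k s g xs"
proof -
  have "(\<Sum>j<s. (f j + g j) mod int p * xs j t) mod int p
      = ((\<Sum>j<s. f j * xs j t) mod int p + (\<Sum>j<s. g j * xs j t) mod int p) mod int p" for t
  proof -
    have "(\<Sum>j<s. (f j + g j) mod int p * xs j t) mod int p
        = (\<Sum>j<s. (f j + g j) mod int p * xs j t mod int p) mod int p"
      by (simp add: mod_sum_eq)
    also have "\<dots> = (\<Sum>j<s. f j * xs j t + g j * xs j t) mod int p"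
      by (simp add: mod_mult_left_eq distrib_right mod_sum_eq)
    finally show ?thesis by (simp add: sum.distrib mod_add_eq)
  qed
  then show ?thesis by (simp add: eval_term_def mult_Zp_pow fun_eq_iff)
qed

definition sample_tuples :: "nat \<Rightarrow> nat \<Rightarrow> nat \<Rightarrow> (nat \<Rightarrow> nat \<Rightarrow> int) set" where
  "sample_tuples p k s = {..<s} \<rightarrow>\<^sub>E carrier (Zp_pow p k)"

lemma finite_sample_tuples: "0 < p \<Longrightarrow> finite (sample_tuples p k s)"
  by (simp add: sample_tuples_def finite_PiE finite_carrier_Zp_pow)

lemma card_sample_tuples: "0 < p \<Longrightarrow> card (sample_tuples p k s) = (p ^ k) ^ s"
  by (simp add: sample_tuples_def card_PiE finite_carrier_Zp_pow card_carrier_Zp_pow)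

lemma eq_if_dvd_diff_reduced:
  fixes a b :: int
  assumes "0 \<le> a" "a < m" "0 \<le> b" "b < m" and "m dvd a - b"
  shows "a = b"
  using assms by (metis mod_eq_dvd_iff mod_pos_pos_trivial)

lemma dvd_coeff_diff_if_eval_term_eq:
  assumes "eval_term p k s f xs = eval_term p k s g xs" and "t < k"
  shows "int p dvd (\<Sum>i<s. (f i - g i) * xs i t)"
proof -
  have "(\<Sum>i<s. f i * xs i t) mod int p = (\<Sum>i<s. g i * xs i t) mod int p"
    using assms by (auto simp: eval_term_def dest!: fun_cong[where x=t])
  then show ?thesis
    by (simp add: mod_eq_dvd_iff sum_subtractf left_diff_distrib)
qed

lemma collisions_determined_off_coord:
  assumes "prime p" and f: "reduced_coeffs p s f" and g: "reduced_coeffs p s g"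
    and "f j \<noteq> g j" and "j < s"
    and xs: "xs \<in> sample_tuples p k s" "eval_term p k s f xs = eval_term p k s g xs"
    and ys: "ys \<in> sample_tuples p k s" "eval_term p k s f ys = eval_term p k s g ys"
    and same: "\<And>i. i < s \<Longrightarrow> i \<noteq> j \<Longrightarrow> xs i = ys i"
  shows "xs = ys"
proof -
  have p0: "0 < p" using assms(1) prime_gt_0_nat by blast
  have "\<not> int p dvd f j - g j"
  proof
    assume "int p dvd f j - g j"
    then have "f j = g j"
      using f g by (intro eq_if_dvd_diff_reduced) (auto simp: reduced_coeffs_def)
    with \<open>f j \<noteq> g j\<close> show False ..
  qed
  have in_range: "0 \<le> zs j t \<and> zs j t < int p" if "zs \<in> sample_tuples p k s" "t < k" for zs t
    using that \<open>j < s\<close> p0 by (auto simp: sample_tuples_def carrier_Zp_pow PiE_iff)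
  have "xs j t = ys j t" if "t < k" for t
  proof -
    have "(\<Sum>i<s. (f i - g i) * xs i t) - (\<Sum>i<s. (f i - g i) * ys i t)
        = (\<Sum>i<s. (f i - g i) * (xs i t - ys i t))"
      by (simp add: sum_subtractf right_diff_distrib)
    also have "\<dots> = (f j - g j) * (xs j t - ys j t)"
      using \<open>j < s\<close> same by (subst sum.remove[of _ j]) (auto intro!: sum.neutral)
    finally have "int p dvd (f j - g j) * (xs j t - ys j t)"
      using dvd_diff[OF dvd_coeff_diff_if_eval_term_eq[OF xs(2) that] dvd_coeff_diff_if_eval_term_eq[OF ys(2) that]]
      by simp
    then have "int p dvd xs j t - ys j t"
      using assms(1) \<open>\<not> int p dvd f j - g j\<close> by (simp add: prime_dvd_mult_iff)
    then show ?thesis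
      using in_range[OF xs(1) that] in_range[OF ys(1) that] eq_if_dvd_diff_reduced by blast
  qed
  moreover have "xs j \<in> carrier (Zp_pow p k)" "ys j \<in> carrier (Zp_pow p k)"
    using xs(1) ys(1) \<open>j < s\<close> by (auto simp: sample_tuples_def)
  ultimately have "xs j = ys j"
    unfolding carrier_Zp_pow[OF p0] by (metis PiE_ext lessThan_iff)
  then show "xs = ys"
    using xs(1) ys(1) same unfolding sample_tuples_def by (metis PiE_ext lessThan_iff)
qed

lemma card_eval_term_collisions:
  assumes "prime p" and f: "reduced_coeffs p s f" and g: "reduced_coeffs p s g" and "f \<noteq> g"
  shows "card {xs \<in> sample_tuples p k s. eval_term p k s f xs = eval_term p k s g xs} \<le> (p ^ k) ^ (s - 1)"
    (is "card ?E \<le> _")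
proof -
  have p0: "0 < p" using assms(1) prime_gt_0_nat by blast
  obtain j where fg: "f j \<noteq> g j" using \<open>f \<noteq> g\<close> by auto
  then have "j < s"
    using f g by (metis not_le reduced_coeffs_def)
  have "inj_on (\<lambda>xs. restrict xs ({..<s} - {j})) ?E"
  proof (rule inj_onI)
    fix xs ys assume "xs \<in> ?E" "ys \<in> ?E"
      and r: "restrict xs ({..<s} - {j}) = restrict ys ({..<s} - {j})"
    moreover have "xs i = ys i" if "i < s" "i \<noteq> j" for i
      using fun_cong[OF r, of i] that by simp
    ultimately show "xs = ys"
      by (intro collisions_determined_off_coord[OF assms(1) f g fg \<open>j < s\<close>]) auto
  qed
  moreover have "(\<lambda>xs. restrict xs ({..<s} - {j})) ` ?E \<subseteq> ({..<s} - {j}) \<rightarrow>\<^sub>E carrier (Zp_pow p k)"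
    by (auto simp: sample_tuples_def PiE_iff split: if_splits)
  ultimately have "card ?E \<le> card (({..<s} - {j}) \<rightarrow>\<^sub>E carrier (Zp_pow p k))"
    by (intro card_inj_on_le) (auto simp: finite_PiE finite_carrier_Zp_pow p0)
  also have "\<dots> = (p ^ k) ^ (s - 1)"
    using \<open>j < s\<close> p0 by (simp add: card_PiE finite_carrier_Zp_pow card_carrier_Zp_pow)
  finally show ?thesis .
qed

lemma card_PiE_lessThan_Suc:
  fixes T :: "'a set"
  shows "card {xs \<in> {..<Suc s} \<rightarrow>\<^sub>E T. P (restrict xs {..<s}) \<and> Q (xs s)}
     = card {ys \<in> {..<s} \<rightarrow>\<^sub>E T. P ys} * card {x \<in> T. Q x}"
proof -
  have restrict_upd: "restrict (ys(s := x)) {..<s} = ys" if "ys \<in> extensional {..<s}" for ys :: "nat \<Rightarrow> 'a" and x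
    using that by (auto simp: restrict_def extensional_def fun_eq_iff)
  have "bij_betw (\<lambda>xs. (restrict xs {..<s}, xs s))
      {xs \<in> {..<Suc s} \<rightarrow>\<^sub>E T. P (restrict xs {..<s}) \<and> Q (xs s)}
      ({ys \<in> {..<s} \<rightarrow>\<^sub>E T. P ys} \<times> {x \<in> T. Q x})"
    by (rule bij_betw_byWitness[where f'="\<lambda>(ys, x). ys(s := x)"])
       (auto simp: PiE_iff restrict_upd extensional_def fun_eq_iff less_Suc_eq)
  then show ?thesis
    by (simp add: bij_betw_same_card card_cartesian_product)
qed

lemma card_fiber_inj_on:
  assumes "inj_on \<sigma> Z"
  shows "card {x \<in> Z. \<sigma> x = l} = (if l \<in> \<sigma> ` Z then 1 else 0)"
proof (cases "l \<in> \<sigma> ` Z")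
  case True
  then obtain x where "x \<in> Z" "\<sigma> x = l" by auto
  then have "{x \<in> Z. \<sigma> x = l} = {x}" using assms by (auto simp: inj_on_def)
  then show ?thesis using True by simp
next
  case False
  then have "{x \<in> Z. \<sigma> x = l} = {}" by auto
  then show ?thesis using False by (metis card.empty)
qed

definition term_label ::
    "nat \<Rightarrow> nat \<Rightarrow> ((nat \<Rightarrow> int) \<Rightarrow> nat) \<Rightarrow> (nat \<Rightarrow> nat \<Rightarrow> int) \<Rightarrow> nat \<Rightarrow> (nat \<Rightarrow> int) option \<Rightarrow> nat" where
  "term_label p k \<sigma> xs s t = (case t of None \<Rightarrow> 0 | Some f \<Rightarrow> \<sigma> (eval_term p k s f xs))"

definition consistent ::
    "nat \<Rightarrow> nat \<Rightarrow> ((nat \<Rightarrow> int) \<Rightarrow> nat) \<Rightarrow> (nat \<Rightarrow> nat \<Rightarrow> int) \<Rightarrow> transcript \<Rightarrow> bool" where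
  "consistent p k \<sigma> xs h \<longleftrightarrow>
     (\<forall>i<length h. snd (h ! i) = term_label p k \<sigma> xs (num_samples h) (formal_terms p h ! i))"

(* The probability, over uniformly random samples, that relabel \<sigma> (Zp_pow p k) gives the answers
   recorded in h to the actions recorded in h. *)
definition likelihood :: "nat \<Rightarrow> nat \<Rightarrow> ((nat \<Rightarrow> int) \<Rightarrow> nat) \<Rightarrow> transcript \<Rightarrow> real" where
  "likelihood p k \<sigma> h =
     card {xs \<in> sample_tuples p k (num_samples h). consistent p k \<sigma> xs h} / (real p ^ k) ^ num_samples h"

lemma consistent_snoc:
  assumes "1 < p"
  shows "consistent p k \<sigma> xs (h @ [(a, l)]) \<longleftrightarrow> consistent p k \<sigma> xs h \<and>
     l = term_label p k \<sigma> xs (num_samples (h @ [(a, l)])) (formal_term p (formal_terms p h) (num_samples h) a)"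
proof -
  have "term_label p k \<sigma> xs (num_samples (h @ [(a, l)])) (formal_terms p h ! i)
      = term_label p k \<sigma> xs (num_samples h) (formal_terms p h ! i)" if "i < length h" for i
  proof (cases "formal_terms p h ! i")
    case (Some f)
    then have "reduced_coeffs p (num_samples h) f"
      using reduced_formal_terms[OF assms that] by simp
    from eval_term_extend[OF this, of "num_samples (h @ [(a, l)])"] show ?thesis
      using Some by (simp add: term_label_def)
  qed (simp add: term_label_def)
  then show ?thesis
    unfolding consistent_def by (auto simp: nth_append less_Suc_eq all_conj_distrib)
qed

lemma consistent_restrict:
  "consistent p k \<sigma> (restrict xs {..<num_samples h}) h = consistent p k \<sigma> xs h"
  unfolding consistent_def term_label_def
  by (auto intro!: arg_cong[where f=\<sigma>] eval_term_cong split: option.splits)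

lemma likelihood_Nil: "0 < p \<Longrightarrow> likelihood p k \<sigma> [] = 1"
  by (simp add: likelihood_def consistent_def card_sample_tuples)

lemma likelihood_bounds:
  assumes "0 < p"
  shows "0 \<le> likelihood p k \<sigma> h" and "likelihood p k \<sigma> h \<le> 1"
proof -
  have "card {xs \<in> sample_tuples p k (num_samples h). consistent p k \<sigma> xs h}
      \<le> card (sample_tuples p k (num_samples h))"
    by (intro card_mono finite_sample_tuples assms) auto
  then have "real (card {xs \<in> sample_tuples p k (num_samples h). consistent p k \<sigma> xs h})
      \<le> (real p ^ k) ^ num_samples h"
    using card_sample_tuples[OF assms] by (metis of_nat_le_iff of_nat_power)
  then show "0 \<le> likelihood p k \<sigma> h" "likelihood p k \<sigma> h \<le> 1"
    using assms by (auto simp: likelihood_def divide_le_eq_1)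
qed

lemma likelihood_snoc_Sample:
  assumes "1 < p" and "inj_on \<sigma> (carrier (Zp_pow p k))"
  shows "likelihood p k \<sigma> (h @ [(Sample, l)])
       = likelihood p k \<sigma> h * (if l \<in> \<sigma> ` carrier (Zp_pow p k) then 1 else 0) / real p ^ k"
proof -
  let ?s = "num_samples h" and ?Z = "carrier (Zp_pow p k)"
  have "eval_term p k (Suc ?s) (\<lambda>j. if j = ?s then 1 else 0) xs = xs ?s" if "xs \<in> {..<Suc ?s} \<rightarrow>\<^sub>E ?Z" for xs
    using that assms(1) by (intro eval_term_unit) auto
  then have "{xs \<in> sample_tuples p k (Suc ?s). consistent p k \<sigma> xs (h @ [(Sample, l)])}
      = {xs \<in> {..<Suc ?s} \<rightarrow>\<^sub>E ?Z. consistent p k \<sigma> (restrict xs {..<?s}) h \<and> \<sigma> (xs ?s) = l}"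
    using assms(1) by (auto simp: sample_tuples_def consistent_snoc consistent_restrict term_label_def)
  moreover have "card {x \<in> ?Z. \<sigma> x = l} = (if l \<in> \<sigma> ` ?Z then 1 else 0)"
    using assms(2) by (rule card_fiber_inj_on)
  ultimately show ?thesis
    using assms(1) card_PiE_lessThan_Suc[of ?s ?Z "\<lambda>ys. consistent p k \<sigma> ys h" "\<lambda>x. \<sigma> x = l"]
    by (simp add: likelihood_def sample_tuples_def field_simps)
qed

lemma table_resp_relabel:
  assumes "1 < p" and "inj_on \<sigma> (carrier (Zp_pow p k))" and "0 \<notin> \<sigma> ` carrier (Zp_pow p k)"
    and "consistent p k \<sigma> xs h"
  shows "table_resp (relabel \<sigma> (Zp_pow p k)) h i j =
     term_label p k \<sigma> xs (num_samples h) (formal_term p (formal_terms p h) (num_samples h) (Mult i j))"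
proof -
  have "snd (h ! i') = (case formal_terms p h ! i' of None \<Rightarrow> 0
      | Some f \<Rightarrow> \<sigma> (eval_term p k (num_samples h) f xs))" if "i' < length h" for i'
    using assms(4) that by (simp add: consistent_def term_label_def)
  moreover have "eval_term p k (num_samples h) f xs \<in> carrier (Zp_pow p k)" for f
    using assms(1) by (simp add: eval_term_in_carrier)
  ultimately show ?thesis
    using assms(2,3)
    by (auto simp: table_resp_def relabel_def term_label_def eval_term_add split: option.splits)
qed

lemma likelihood_snoc_Mult:
  assumes "1 < p" and "inj_on \<sigma> (carrier (Zp_pow p k))" and "0 \<notin> \<sigma> ` carrier (Zp_pow p k)"
  shows "likelihood p k \<sigma> (h @ [(Mult i j, l)])
       = likelihood p k \<sigma> h * (if l = table_resp (relabel \<sigma> (Zp_pow p k)) h i j then 1 else 0)"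
proof -
  have "consistent p k \<sigma> xs (h @ [(Mult i j, l)]) \<longleftrightarrow>
      consistent p k \<sigma> xs h \<and> l = table_resp (relabel \<sigma> (Zp_pow p k)) h i j" for xs
    using consistent_snoc[OF assms(1)] table_resp_relabel[OF assms] by (auto simp del: formal_term.simps)
  then show ?thesis by (simp add: likelihood_def)
qed

lemma table_resp_relabel_in:
  assumes "group G"
  shows "table_resp (relabel \<sigma> G) h i j \<in> insert 0 (\<sigma> ` carrier G)"
  using group.subgroup_self[OF assms] by (auto simp: table_resp_def relabel_def inv_into_into subgroup.m_closed)

lemma likelihood_mult_prob_Sample:
  assumes "1 < p" and inj: "inj_on \<sigma> (carrier (Zp_pow p k))"
    and "finite L" and "\<sigma> ` carrier (Zp_pow p k) \<subseteq> L"
  shows "likelihood p k \<sigma> h * measure_pmf.prob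
       (pmf_of_set (carrier (relabel \<sigma> (Zp_pow p k))) \<bind> (\<lambda>x. F (h @ [(Sample, x)]))) Ob
     = (\<Sum>l\<in>L. likelihood p k \<sigma> (h @ [(Sample, l)]) * measure_pmf.prob (F (h @ [(Sample, l)])) Ob)"
proof -
  let ?Z = "carrier (Zp_pow p k)"
  have p0: "0 < p" using assms(1) by simp
  have card: "card (\<sigma> ` ?Z) = p ^ k" "finite (\<sigma> ` ?Z)" "\<sigma> ` ?Z \<noteq> {}"
    using card_image[OF inj] card_carrier_Zp_pow[OF p0] finite_carrier_Zp_pow[OF p0] p0 by auto
  then have "likelihood p k \<sigma> h * measure_pmf.prob
       (pmf_of_set (carrier (relabel \<sigma> (Zp_pow p k))) \<bind> (\<lambda>x. F (h @ [(Sample, x)]))) Ob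
      = (\<Sum>x\<in>\<sigma> ` ?Z. likelihood p k \<sigma> (h @ [(Sample, x)]) * measure_pmf.prob (F (h @ [(Sample, x)])) Ob)"
    using assms(1) inj
    by (simp add: measure_bind_pmf relabel_def integral_pmf_of_set likelihood_snoc_Sample
        sum_divide_distrib sum_distrib_left)
  also have "\<dots> = (\<Sum>l\<in>L. likelihood p k \<sigma> (h @ [(Sample, l)]) * measure_pmf.prob (F (h @ [(Sample, l)])) Ob)"
    using assms by (intro sum.mono_neutral_left) (auto simp: likelihood_snoc_Sample)
  finally show ?thesis .
qed

lemma likelihood_mult_prob_Mult:
  assumes "1 < p" and "inj_on \<sigma> (carrier (Zp_pow p k))" and "0 \<notin> \<sigma> ` carrier (Zp_pow p k)"
    and "finite L" and "insert 0 (\<sigma> ` carrier (Zp_pow p k)) \<subseteq> L"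
  shows "likelihood p k \<sigma> h * measure_pmf.prob (F (h @ [(Mult i j, table_resp (relabel \<sigma> (Zp_pow p k)) h i j)])) Ob
     = (\<Sum>l\<in>L. likelihood p k \<sigma> (h @ [(Mult i j, l)]) * measure_pmf.prob (F (h @ [(Mult i j, l)])) Ob)"
proof -
  let ?r = "table_resp (relabel \<sigma> (Zp_pow p k)) h i j"
  have "?r \<in> L" using table_resp_relabel_in[OF group_Zp_pow] assms(5) by blast
  have "(\<Sum>l\<in>L. likelihood p k \<sigma> (h @ [(Mult i j, l)]) * measure_pmf.prob (F (h @ [(Mult i j, l)])) Ob)
      = (\<Sum>l\<in>L. if l = ?r then likelihood p k \<sigma> h * measure_pmf.prob (F (h @ [(Mult i j, ?r)])) Ob else 0)"
    by (intro sum.cong) (simp_all add: likelihood_snoc_Mult[OF assms(1-3)])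
  also have "\<dots> = likelihood p k \<sigma> h * measure_pmf.prob (F (h @ [(Mult i j, ?r)])) Ob"
    using \<open>?r \<in> L\<close> assms(4) by simp
  finally show ?thesis ..
qed

lemma outcome_mass_likelihood:
  assumes "1 < p" and "inj_on \<sigma> (carrier (Zp_pow p k))" and "0 \<notin> \<sigma> ` carrier (Zp_pow p k)"
    and "finite L" and "insert 0 (\<sigma> ` carrier (Zp_pow p k)) \<subseteq> L"
  shows "outcome_mass A L (likelihood p k \<sigma>) Ob n h
       = likelihood p k \<sigma> h * measure_pmf.prob (exec (relabel \<sigma> (Zp_pow p k)) A n h) Ob"
proof (induction n arbitrary: h)
  case 0
  show ?case by (simp only: outcome_mass.simps exec_0)
next
  case (Suc n)
  let ?G = "relabel \<sigma> (Zp_pow p k)" and ?\<Lambda> = "likelihood p k \<sigma>"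
  have "?\<Lambda> h * measure_pmf.prob (case a of
        Answer b \<Rightarrow> return_pmf (Some b)
      | Sample \<Rightarrow> pmf_of_set (carrier ?G) \<bind> (\<lambda>x. exec ?G A n (h @ [(Sample, x)]))
      | Mult i j \<Rightarrow> exec ?G A n (h @ [(Mult i j, table_resp ?G h i j)])) Ob
    = mass_step ?\<Lambda> Ob L (outcome_mass A L ?\<Lambda> Ob n) h a" for a
    using assms by (cases a)
      (simp_all add: mass_step_def Suc.IH likelihood_mult_prob_Sample likelihood_mult_prob_Mult)
  then show ?case
    by (simp add: measure_bind_pmf flip: integral_mult_right_zero)
qed

definition falling_fact :: "nat \<Rightarrow> nat \<Rightarrow> nat" where
  "falling_fact M D = (\<Prod>i<D. M - i)"

lemma falling_fact_add:
  "falling_fact M (D + E) = falling_fact M D * falling_fact (M - D) E"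
  by (induction E) (simp_all add: falling_fact_def diff_diff_add)

lemma card_inj_on_PiE: "finite A \<Longrightarrow> finite B \<Longrightarrow>
    card {f \<in> A \<rightarrow>\<^sub>E B. inj_on f A} = falling_fact (card B) (card A)"
  using card_inj_on_subset_funcset[of A B A] by (simp add: falling_fact_def atLeast0LessThan)

lemma inj_on_piecewise:
  assumes "inj_on \<phi> U" and "inj_on f (A - U)" and "\<And>a u. a \<in> A - U \<Longrightarrow> u \<in> U \<Longrightarrow> f a \<noteq> \<phi> u"
  shows "inj_on (\<lambda>a. if a \<in> U then \<phi> a else f a) A"
  using assms assms(3)[symmetric] by (auto simp: inj_on_def)

lemma card_inj_on_PiE_extending:
  assumes "finite A" and "finite B" and "U \<subseteq> A" and "inj_on \<phi> U" and "\<phi> ` U \<subseteq> B"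
  shows "card {\<sigma> \<in> A \<rightarrow>\<^sub>E B. inj_on \<sigma> A \<and> (\<forall>u\<in>U. \<sigma> u = \<phi> u)}
       = falling_fact (card B - card U) (card A - card U)"
proof -
  have "bij_betw (\<lambda>\<sigma>. restrict \<sigma> (A - U))
      {\<sigma> \<in> A \<rightarrow>\<^sub>E B. inj_on \<sigma> A \<and> (\<forall>u\<in>U. \<sigma> u = \<phi> u)}
      {f \<in> (A - U) \<rightarrow>\<^sub>E (B - \<phi> ` U). inj_on f (A - U)}"
  proof (rule bij_betw_byWitness[where f'="\<lambda>f. \<lambda>a\<in>A. if a \<in> U then \<phi> a else f a"])
    show "(\<lambda>\<sigma>. restrict \<sigma> (A - U)) ` {\<sigma> \<in> A \<rightarrow>\<^sub>E B. inj_on \<sigma> A \<and> (\<forall>u\<in>U. \<sigma> u = \<phi> u)}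
        \<subseteq> {f \<in> (A - U) \<rightarrow>\<^sub>E (B - \<phi> ` U). inj_on f (A - U)}"
    proof (intro image_subsetI CollectI conjI)
      fix \<sigma> assume \<sigma>: "\<sigma> \<in> {\<sigma> \<in> A \<rightarrow>\<^sub>E B. inj_on \<sigma> A \<and> (\<forall>u\<in>U. \<sigma> u = \<phi> u)}"
      have "\<phi> ` U = \<sigma> ` U" using \<sigma> by auto
      then have "\<sigma> a \<notin> \<phi> ` U" if "a \<in> A - U" for a
        using inj_on_image_set_diff[of \<sigma> A A U] \<sigma> assms(3) that by auto
      then show "restrict \<sigma> (A - U) \<in> (A - U) \<rightarrow>\<^sub>E (B - \<phi> ` U)"
        using \<sigma> by (auto simp: PiE_iff)
      show "inj_on (restrict \<sigma> (A - U)) (A - U)"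
        using \<sigma> by (auto simp: inj_on_def)
    qed
    show "(\<lambda>f. \<lambda>a\<in>A. if a \<in> U then \<phi> a else f a) ` {f \<in> (A - U) \<rightarrow>\<^sub>E (B - \<phi> ` U). inj_on f (A - U)}
        \<subseteq> {\<sigma> \<in> A \<rightarrow>\<^sub>E B. inj_on \<sigma> A \<and> (\<forall>u\<in>U. \<sigma> u = \<phi> u)}"
    proof (intro image_subsetI CollectI conjI)
      fix f assume f: "f \<in> {f \<in> (A - U) \<rightarrow>\<^sub>E (B - \<phi> ` U). inj_on f (A - U)}"
      show "(\<lambda>a\<in>A. if a \<in> U then \<phi> a else f a) \<in> A \<rightarrow>\<^sub>E B"
        using f assms(5) by (auto simp: PiE_iff)
      show "\<forall>u\<in>U. (\<lambda>a\<in>A. if a \<in> U then \<phi> a else f a) u = \<phi> u"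
        using assms(3) by auto
      have "f a \<noteq> \<phi> u" if "a \<in> A - U" "u \<in> U" for a u
        using f that by (auto simp: PiE_iff)
      then have "inj_on (\<lambda>a. if a \<in> U then \<phi> a else f a) A"
        using f by (intro inj_on_piecewise[OF assms(4)]) auto
      then show "inj_on (\<lambda>a\<in>A. if a \<in> U then \<phi> a else f a) A"
        by (simp add: inj_on_def)
    qed
  qed (use assms(3) in \<open>auto simp: PiE_iff extensional_def fun_eq_iff\<close>)
  moreover have "card (B - \<phi> ` U) = card B - card U"
    using assms(2,4,5) by (simp add: card_Diff_subset finite_subset card_image)
  ultimately show ?thesis
    using assms(1-3) by (simp add: bij_betw_same_card card_inj_on_PiE card_Diff_subset finite_subset)
qed

lemma card_inj_on_PiE_prescribed:
  assumes "finite A" and "finite B" and "v ` I \<subseteq> A" and "l ` I \<subseteq> B"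
    and pattern: "\<And>i i'. i \<in> I \<Longrightarrow> i' \<in> I \<Longrightarrow> v i = v i' \<longleftrightarrow> l i = l i'"
  shows "card {\<sigma> \<in> A \<rightarrow>\<^sub>E B. inj_on \<sigma> A \<and> (\<forall>i\<in>I. \<sigma> (v i) = l i)}
       = falling_fact (card B - card (l ` I)) (card A - card (l ` I))"
proof -
  define \<phi> where "\<phi> u = l (SOME i. i \<in> I \<and> v i = u)" for u
  have \<phi>: "\<phi> (v i) = l i" if "i \<in> I" for i
    using someI[of "\<lambda>i'. i' \<in> I \<and> v i' = v i" i] that pattern by (auto simp: \<phi>_def)
  have inj: "inj_on \<phi> (v ` I)"
    using \<phi> pattern by (auto simp: inj_on_def)
  have img: "\<phi> ` v ` I = l ` I"
    using \<phi> by (auto simp: image_image cong: image_cong)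
  then have "card (v ` I) = card (l ` I)"
    using card_image[OF inj] by simp
  moreover have "(\<forall>i\<in>I. \<sigma> (v i) = l i) \<longleftrightarrow> (\<forall>u\<in>v ` I. \<sigma> u = \<phi> u)" for \<sigma> :: "'a \<Rightarrow> 'b"
    using \<phi> by auto
  ultimately show ?thesis
    using card_inj_on_PiE_extending[OF assms(1-3) inj] img assms(4) by simp
qed

definition proper_entries :: "nat \<Rightarrow> transcript \<Rightarrow> nat set" where
  "proper_entries p h = {i. i < length h \<and> formal_terms p h ! i \<noteq> None}"

definition entry_labels :: "nat \<Rightarrow> transcript \<Rightarrow> nat set" where
  "entry_labels p h = (\<lambda>i. snd (h ! i)) ` proper_entries p h"

definition junk_zero :: "nat \<Rightarrow> transcript \<Rightarrow> bool" where
  "junk_zero p h \<longleftrightarrow> (\<forall>i<length h. formal_terms p h ! i = None \<longrightarrow> snd (h ! i) = 0)"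

definition faithful :: "nat \<Rightarrow> transcript \<Rightarrow> bool" where
  "faithful p h \<longleftrightarrow> (\<forall>i\<in>proper_entries p h. \<forall>i'\<in>proper_entries p h.
     formal_terms p h ! i = formal_terms p h ! i' \<longleftrightarrow> snd (h ! i) = snd (h ! i'))"

definition respects_labels :: "nat \<Rightarrow> nat \<Rightarrow> transcript \<Rightarrow> (nat \<Rightarrow> nat \<Rightarrow> int) \<Rightarrow> bool" where
  "respects_labels p k h xs \<longleftrightarrow> (\<forall>i\<in>proper_entries p h. \<forall>i'\<in>proper_entries p h.
     eval_term p k (num_samples h) (the (formal_terms p h ! i)) xs
       = eval_term p k (num_samples h) (the (formal_terms p h ! i')) xs
     \<longleftrightarrow> snd (h ! i) = snd (h ! i'))"

definition labelings :: "nat \<Rightarrow> nat \<Rightarrow> nat \<Rightarrow> ((nat \<Rightarrow> int) \<Rightarrow> nat) set" where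
  "labelings p k M = {\<sigma> \<in> carrier (Zp_pow p k) \<rightarrow>\<^sub>E {1..M}. inj_on \<sigma> (carrier (Zp_pow p k))}"

definition avg_likelihood :: "nat \<Rightarrow> nat \<Rightarrow> nat \<Rightarrow> transcript \<Rightarrow> real" where
  "avg_likelihood p k M h = (\<Sum>\<sigma>\<in>labelings p k M. likelihood p k \<sigma> h) / card (labelings p k M)"

lemma finite_proper_entries: "finite (proper_entries p h)"
  by (simp add: proper_entries_def)

lemma finite_entry_labels: "finite (entry_labels p h)"
  by (simp add: entry_labels_def finite_proper_entries)

lemma card_proper_entries_le: "card (proper_entries p h) \<le> length h"
  using card_mono[of "{..<length h}" "proper_entries p h"] by (auto simp: proper_entries_def)

lemma card_entry_labels_le: "card (entry_labels p h) \<le> length h"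
  using card_image_le[OF finite_proper_entries] card_proper_entries_le
  unfolding entry_labels_def by (rule le_trans)

lemma consistent_iff:
  "consistent p k \<sigma> xs h \<longleftrightarrow> junk_zero p h \<and>
     (\<forall>i\<in>proper_entries p h. \<sigma> (eval_term p k (num_samples h) (the (formal_terms p h ! i)) xs) = snd (h ! i))"
  unfolding consistent_def junk_zero_def proper_entries_def term_label_def
  by (auto split: option.splits)

lemma finite_labelings: "0 < p \<Longrightarrow> finite (labelings p k M)"
  by (simp add: labelings_def finite_PiE finite_carrier_Zp_pow)

lemma card_labelings: "0 < p \<Longrightarrow> card (labelings p k M) = falling_fact M (p ^ k)"
  by (simp add: labelings_def card_inj_on_PiE finite_carrier_Zp_pow card_carrier_Zp_pow)

lemma labelings_props:
  assumes "\<sigma> \<in> labelings p k M"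
  shows "inj_on \<sigma> (carrier (Zp_pow p k))" and "0 \<notin> \<sigma> ` carrier (Zp_pow p k)"
    and "\<sigma> ` carrier (Zp_pow p k) \<subseteq> {1..M}"
  using assms by (auto simp: labelings_def PiE_iff)

lemma consistent_labeling_imp_respects:
  assumes "0 < p" and \<sigma>: "\<sigma> \<in> labelings p k M" and "consistent p k \<sigma> xs h"
  shows "junk_zero p h \<and> respects_labels p k h xs \<and> entry_labels p h \<subseteq> {1..M}"
proof -
  let ?Z = "carrier (Zp_pow p k)" and ?P = "proper_entries p h"
  let ?v = "\<lambda>i. eval_term p k (num_samples h) (the (formal_terms p h ! i)) xs" and ?l = "\<lambda>i. snd (h ! i)"
  have v: "?v i \<in> ?Z" for i
    using assms(1) by (simp add: eval_term_in_carrier)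
  have lab: "\<sigma> (?v i) = ?l i" if "i \<in> ?P" for i
    using assms(3) that by (simp add: consistent_iff)
  have "?l i \<in> {1..M}" if "i \<in> ?P" for i
    using labelings_props(3)[OF \<sigma>] v[of i] lab[OF that] by (metis image_subset_iff)
  moreover have "?v i = ?v i' \<longleftrightarrow> ?l i = ?l i'" if "i \<in> ?P" "i' \<in> ?P" for i i'
    using inj_on_eq_iff[OF labelings_props(1)[OF \<sigma>] v v] lab that by metis
  ultimately show ?thesis
    using assms(3) by (auto simp: consistent_iff respects_labels_def entry_labels_def)
qed

lemma card_consistent_labelings:
  assumes "0 < p"
  shows "card {\<sigma> \<in> labelings p k M. consistent p k \<sigma> xs h} =
    (if junk_zero p h \<and> respects_labels p k h xs \<and> entry_labels p h \<subseteq> {1..M}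
     then falling_fact (M - card (entry_labels p h)) (p ^ k - card (entry_labels p h)) else 0)"
proof (cases "junk_zero p h \<and> respects_labels p k h xs \<and> entry_labels p h \<subseteq> {1..M}")
  case True
  let ?Z = "carrier (Zp_pow p k)" and ?P = "proper_entries p h"
  let ?v = "\<lambda>i. eval_term p k (num_samples h) (the (formal_terms p h ! i)) xs" and ?l = "\<lambda>i. snd (h ! i)"
  have "{\<sigma> \<in> labelings p k M. consistent p k \<sigma> xs h}
      = {\<sigma> \<in> ?Z \<rightarrow>\<^sub>E {1..M}. inj_on \<sigma> ?Z \<and> (\<forall>i\<in>?P. \<sigma> (?v i) = ?l i)}"
    using True by (auto simp: labelings_def consistent_iff)
  also have "card \<dots> = falling_fact (card {1..M} - card (?l ` ?P)) (card ?Z - card (?l ` ?P))"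
    using True assms unfolding respects_labels_def entry_labels_def
    by (intro card_inj_on_PiE_prescribed) (auto simp: finite_carrier_Zp_pow eval_term_in_carrier)
  finally show ?thesis
    using True assms by (simp add: entry_labels_def card_carrier_Zp_pow)
next
  case False
  then have "{\<sigma> \<in> labelings p k M. consistent p k \<sigma> xs h} = {}"
    using consistent_labeling_imp_respects[OF assms] by blast
  then show ?thesis
    using False by (metis (no_types, lifting) card.empty)
qed

lemma card_filter_eq_sum: "finite A \<Longrightarrow> card {x \<in> A. P x} = (\<Sum>x\<in>A. of_bool (P x))"
  by (simp add: Int_def conj_commute)

lemma avg_likelihood_eq:
  assumes "0 < p" and "p ^ k \<le> M" and "card (entry_labels p h) \<le> p ^ k"
  shows "avg_likelihood p k M h = (if junk_zero p h \<and> entry_labels p h \<subseteq> {1..M} then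
      card {xs \<in> sample_tuples p k (num_samples h). respects_labels p k h xs}
        / (real p ^ k) ^ num_samples h / falling_fact M (card (entry_labels p h))
     else 0)"
proof -
  let ?X = "sample_tuples p k (num_samples h)" and ?\<Sigma> = "labelings p k M"
  let ?D = "card (entry_labels p h)"
  let ?C = "falling_fact (M - ?D) (p ^ k - ?D)"
  have fin: "finite ?X" "finite ?\<Sigma>"
    using assms(1) by (simp_all add: finite_sample_tuples finite_labelings)
  have "(\<Sum>\<sigma>\<in>?\<Sigma>. card {xs \<in> ?X. consistent p k \<sigma> xs h})
      = (\<Sum>xs\<in>?X. card {\<sigma> \<in> ?\<Sigma>. consistent p k \<sigma> xs h})"
    by (simp only: card_filter_eq_sum fin) (rule sum.swap)
  also have "\<dots> = (\<Sum>xs\<in>?X. of_bool (junk_zero p h \<and> entry_labels p h \<subseteq> {1..M})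
      * (of_bool (respects_labels p k h xs) * ?C))"
    by (intro sum.cong) (simp_all add: card_consistent_labelings[OF assms(1)])
  also have "\<dots> = of_bool (junk_zero p h \<and> entry_labels p h \<subseteq> {1..M})
      * (card {xs \<in> ?X. respects_labels p k h xs} * ?C)"
    using fin by (simp add: card_filter_eq_sum sum_distrib_left sum_distrib_right)
  finally have sum_eq: "(\<Sum>\<sigma>\<in>?\<Sigma>. card {xs \<in> ?X. consistent p k \<sigma> xs h}) = \<dots>" .
  have card_eq: "card ?\<Sigma> = falling_fact M ?D * ?C"
    using card_labelings[OF assms(1)] falling_fact_add[of M ?D "p ^ k - ?D"] assms(3) by simp
  have "avg_likelihood p k M h
      = real (\<Sum>\<sigma>\<in>?\<Sigma>. card {xs \<in> ?X. consistent p k \<sigma> xs h}) / (real p ^ k) ^ num_samples h / card ?\<Sigma>"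
    unfolding avg_likelihood_def likelihood_def by (simp add: sum_divide_distrib)
  also have "\<dots> = real (of_bool (junk_zero p h \<and> entry_labels p h \<subseteq> {1..M})
      * (card {xs \<in> ?X. respects_labels p k h xs} * ?C)) / (real p ^ k) ^ num_samples h
      / (falling_fact M ?D * ?C)"
    by (simp only: sum_eq card_eq)
  moreover have "0 < falling_fact M ?D" "0 < ?C"
    using assms(2,3) by (auto simp: falling_fact_def)
  ultimately show ?thesis by simp
qed

(* The same probability for an idealised oracle that gives every formally new term a fresh
   uniformly random label from {1..M}. *)
definition generic_likelihood :: "nat \<Rightarrow> nat \<Rightarrow> transcript \<Rightarrow> real" where
  "generic_likelihood p M h =
     (if junk_zero p h \<and> entry_labels p h \<subseteq> {1..M} \<and> faithful p h
      then 1 / falling_fact M (card (entry_labels p h)) else 0)"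

lemma proper_entries_snoc:
  "proper_entries p (h @ [(a, l)]) = proper_entries p h \<union>
     (if formal_term p (formal_terms p h) (num_samples h) a = None then {} else {length h})"
  by (auto simp: proper_entries_def nth_append less_Suc_eq simp del: formal_term.simps)

lemma entry_labels_snoc:
  "entry_labels p (h @ [(a, l)]) = entry_labels p h \<union>
     (if formal_term p (formal_terms p h) (num_samples h) a = None then {} else {l})"
proof -
  have "(\<lambda>i. snd ((h @ [(a, l)]) ! i)) ` proper_entries p h = (\<lambda>i. snd (h ! i)) ` proper_entries p h"
    by (intro image_cong) (auto simp: proper_entries_def nth_append)
  then show ?thesis
    unfolding entry_labels_def proper_entries_snoc by (auto simp del: formal_term.simps)
qed

lemma junk_zero_snoc:
  "junk_zero p (h @ [(a, l)]) \<longleftrightarrow> junk_zero p h \<and>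
     (formal_term p (formal_terms p h) (num_samples h) a = None \<longrightarrow> l = 0)"
  by (auto simp: junk_zero_def nth_append less_Suc_eq all_conj_distrib simp del: formal_term.simps)

lemma faithful_snoc:
  "faithful p (h @ [(a, l)]) \<longleftrightarrow> faithful p h \<and>
     (formal_term p (formal_terms p h) (num_samples h) a \<noteq> None \<longrightarrow>
       (\<forall>i\<in>proper_entries p h. formal_terms p h ! i = formal_term p (formal_terms p h) (num_samples h) a
          \<longleftrightarrow> snd (h ! i) = l))"
proof -
  have "i \<in> proper_entries p h \<Longrightarrow> i < length h" for i
    by (simp add: proper_entries_def)
  then show ?thesis
    unfolding faithful_def proper_entries_snoc
    by (auto simp: nth_append eq_commute simp del: formal_term.simps)
qed

lemma falling_fact_Suc: "falling_fact M (Suc D) = falling_fact M D * (M - D)"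
  by (simp add: falling_fact_def)

lemma generic_likelihood_snoc_Some:
  assumes "formal_term p (formal_terms p h) (num_samples h) a = Some f"
  shows "generic_likelihood p M (h @ [(a, l)]) =
    (if junk_zero p h \<and> insert l (entry_labels p h) \<subseteq> {1..M} \<and> faithful p h \<and>
        (\<forall>i\<in>proper_entries p h. formal_terms p h ! i = Some f \<longleftrightarrow> snd (h ! i) = l)
     then 1 / falling_fact M (card (insert l (entry_labels p h))) else 0)"
  using assms by (simp add: generic_likelihood_def junk_zero_snoc entry_labels_snoc faithful_snoc
      del: formal_term.simps)

lemma sum_generic_likelihood_snoc_repeated:
  assumes "formal_term p (formal_terms p h) (num_samples h) a = Some f"
    and "i\<^sub>0 \<in> proper_entries p h" and "formal_terms p h ! i\<^sub>0 = Some f"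
    and "junk_zero p h" and "entry_labels p h \<subseteq> {1..M}" and "faithful p h"
  shows "(\<Sum>l\<in>{0..M}. generic_likelihood p M (h @ [(a, l)])) = generic_likelihood p M h"
proof -
  let ?l\<^sub>0 = "snd (h ! i\<^sub>0)"
  have "formal_terms p h ! i = Some f \<longleftrightarrow> snd (h ! i) = ?l\<^sub>0" if "i \<in> proper_entries p h" for i
    using assms(3,6) that assms(2) unfolding faithful_def by metis
  moreover have "?l\<^sub>0 \<in> entry_labels p h" using assms(2) by (simp add: entry_labels_def)
  ultimately have "generic_likelihood p M (h @ [(a, l)]) = (if l = ?l\<^sub>0 then generic_likelihood p M h else 0)" for l
    unfolding generic_likelihood_snoc_Some[OF assms(1)] using assms(2,4-6)
    by (auto simp: generic_likelihood_def insert_absorb)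
  moreover have "?l\<^sub>0 \<in> {0..M}" using \<open>?l\<^sub>0 \<in> entry_labels p h\<close> assms(5) by auto
  ultimately show ?thesis by simp
qed

lemma sum_generic_likelihood_snoc_fresh:
  assumes "formal_term p (formal_terms p h) (num_samples h) a = Some f"
    and "\<forall>i\<in>proper_entries p h. formal_terms p h ! i \<noteq> Some f"
    and "junk_zero p h" and "entry_labels p h \<subseteq> {1..M}" and "faithful p h"
    and "card (entry_labels p h) < M"
  shows "(\<Sum>l\<in>{0..M}. generic_likelihood p M (h @ [(a, l)])) = generic_likelihood p M h"
proof -
  let ?S = "entry_labels p h" and ?D = "card (entry_labels p h)"
  have "generic_likelihood p M (h @ [(a, l)])
      = (if l \<in> {1..M} - ?S then 1 / falling_fact M (Suc ?D) else 0)" for l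
    unfolding generic_likelihood_snoc_Some[OF assms(1)]
    using assms(2-5) finite_entry_labels[of p h] by (auto simp: entry_labels_def)
  then have "(\<Sum>l\<in>{0..M}. generic_likelihood p M (h @ [(a, l)]))
      = (\<Sum>l\<in>{l \<in> {0..M}. l \<in> {1..M} - ?S}. 1 / falling_fact M (Suc ?D))"
    by (simp only: sum.inter_filter finite_atLeastAtMost)
  also have "{l \<in> {0..M}. l \<in> {1..M} - ?S} = {1..M} - ?S"
    by auto
  also have "(\<Sum>l\<in>{1..M} - ?S. 1 / falling_fact M (Suc ?D)) = (M - ?D) / falling_fact M (Suc ?D)"
    using assms(4) by (simp add: card_Diff_subset finite_entry_labels)
  also have "\<dots> = 1 / falling_fact M ?D"
    using assms(6) by (simp add: falling_fact_Suc)
  finally show ?thesis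
    using assms(3-5) by (simp add: generic_likelihood_def)
qed

lemma sum_generic_likelihood_snoc:
  assumes "card (entry_labels p h) < M"
  shows "(\<Sum>l\<in>{0..M}. generic_likelihood p M (h @ [(a, l)])) = generic_likelihood p M h"
proof (cases "formal_term p (formal_terms p h) (num_samples h) a")
  case None
  then have "generic_likelihood p M (h @ [(a, l)]) = (if l = 0 then generic_likelihood p M h else 0)" for l
    by (simp add: generic_likelihood_def junk_zero_snoc entry_labels_snoc faithful_snoc del: formal_term.simps)
  then show ?thesis by simp
next
  case (Some f)
  show ?thesis
  proof (cases "junk_zero p h \<and> entry_labels p h \<subseteq> {1..M} \<and> faithful p h")
    case True
    then show ?thesis
      using sum_generic_likelihood_snoc_repeated[OF Some] sum_generic_likelihood_snoc_fresh[OF Some _ _ _ _ assms]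
      by blast
  next
    case False
    then have "generic_likelihood p M (h @ [(a, l)]) = 0" for l
      unfolding generic_likelihood_snoc_Some[OF Some] by auto
    then show ?thesis
      using False by (auto simp: generic_likelihood_def)
  qed
qed

lemma generic_likelihood_bounds: "0 \<le> generic_likelihood p M h" "generic_likelihood p M h \<le> 1"
proof -
  have "1 / real n \<le> 1" for n :: nat
    by (cases n) auto
  then show "0 \<le> generic_likelihood p M h" "generic_likelihood p M h \<le> 1"
    by (auto simp: generic_likelihood_def)
qed

lemma avg_likelihood_bounds:
  assumes "0 < p"
  shows "0 \<le> avg_likelihood p k M h" "avg_likelihood p k M h \<le> 1"
proof -
  have "0 \<le> (\<Sum>\<sigma>\<in>labelings p k M. likelihood p k \<sigma> h)"
    "(\<Sum>\<sigma>\<in>labelings p k M. likelihood p k \<sigma> h) \<le> card (labelings p k M)"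
    using sum_mono[of _ "\<lambda>\<sigma>. likelihood p k \<sigma> h" "\<lambda>_. 1"] likelihood_bounds[OF assms]
    by (auto intro: sum_nonneg)
  then show "0 \<le> avg_likelihood p k M h" "avg_likelihood p k M h \<le> 1"
    by (auto simp: avg_likelihood_def divide_le_eq_1)
qed

lemma card_eval_term_collisions_real:
  assumes "prime p" and "reduced_coeffs p s f" and "reduced_coeffs p s g" and "f \<noteq> g"
  shows "real (card {xs \<in> sample_tuples p k s. eval_term p k s f xs = eval_term p k s g xs})
       \<le> (real p ^ k) ^ s / real p ^ k"
proof -
  have "0 < s"
    using assms(2-4) by (rule_tac ccontr) (auto simp: reduced_coeffs_def fun_eq_iff)
  moreover have "0 < p" using assms(1) prime_gt_0_nat by blast
  ultimately have "(real p ^ k) ^ s / real p ^ k = real ((p ^ k) ^ (s - 1))"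
    by (cases s) simp_all
  then show ?thesis
    using card_eval_term_collisions[OF assms] by (simp only: of_nat_le_iff)
qed

lemma not_respects_labels_imp_collision:
  assumes "faithful p h" and "\<not> respects_labels p k h xs"
  shows "\<exists>i\<in>proper_entries p h. \<exists>i'\<in>proper_entries p h. formal_terms p h ! i \<noteq> formal_terms p h ! i' \<and>
    eval_term p k (num_samples h) (the (formal_terms p h ! i)) xs
      = eval_term p k (num_samples h) (the (formal_terms p h ! i')) xs"
proof (rule ccontr)
  assume no_collision: "\<not> ?thesis"
  have "eval_term p k (num_samples h) (the (formal_terms p h ! i)) xs
      = eval_term p k (num_samples h) (the (formal_terms p h ! i')) xs \<longleftrightarrow> snd (h ! i) = snd (h ! i')"
    if "i \<in> proper_entries p h" "i' \<in> proper_entries p h" for i i'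
  proof -
    have "formal_terms p h ! i = formal_terms p h ! i' \<longleftrightarrow> snd (h ! i) = snd (h ! i')"
      using assms(1) that by (simp add: faithful_def)
    then show ?thesis
      using no_collision that by (cases "formal_terms p h ! i = formal_terms p h ! i'") auto
  qed
  then show False
    using assms(2) by (simp add: respects_labels_def)
qed

lemma card_term_collisions:
  assumes "prime p" and "i \<in> proper_entries p h" and "i' \<in> proper_entries p h"
    and "formal_terms p h ! i \<noteq> formal_terms p h ! i'"
  shows "real (card {xs \<in> sample_tuples p k (num_samples h).
      eval_term p k (num_samples h) (the (formal_terms p h ! i)) xs
        = eval_term p k (num_samples h) (the (formal_terms p h ! i')) xs})
    \<le> (real p ^ k) ^ num_samples h / real p ^ k"
proof -
  obtain f f' where f: "formal_terms p h ! i = Some f" "formal_terms p h ! i' = Some f'"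
    using assms(2,3) by (auto simp: proper_entries_def)
  moreover have "reduced_coeffs p (num_samples h) f" "reduced_coeffs p (num_samples h) f'"
    using f assms(1-3) prime_gt_1_nat reduced_formal_terms by (auto simp: proper_entries_def)
  ultimately show ?thesis
    using card_eval_term_collisions_real[OF assms(1)] assms(4) by simp
qed

lemma card_proper_entries_sq_le: "card (proper_entries p h \<times> proper_entries p h) \<le> length h ^ 2"
  using card_proper_entries_le[of p h] by (simp add: card_cartesian_product power2_eq_square mult_le_mono)

lemma card_not_respects_labels:
  assumes "prime p" and "faithful p h"
  shows "real (card {xs \<in> sample_tuples p k (num_samples h). \<not> respects_labels p k h xs})
     \<le> real (length h) ^ 2 * (real p ^ k) ^ num_samples h / real p ^ k"
proof -
  let ?s = "num_samples h" and ?X = "sample_tuples p k (num_samples h)" and ?P = "proper_entries p h"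
  let ?F = "\<lambda>i. the (formal_terms p h ! i)"
  let ?pairs = "{(i, i') \<in> ?P \<times> ?P. formal_terms p h ! i \<noteq> formal_terms p h ! i'}"
  let ?E = "\<lambda>(i, i'). {xs \<in> ?X. eval_term p k ?s (?F i) xs = eval_term p k ?s (?F i') xs}"
  have p0: "0 < p" using assms(1) prime_gt_0_nat by blast
  have fin: "finite ?pairs"
    by (rule finite_subset[of _ "?P \<times> ?P"]) (auto simp: finite_proper_entries)
  have "{xs \<in> ?X. \<not> respects_labels p k h xs} \<subseteq> (\<Union>ii\<in>?pairs. ?E ii)"
    using not_respects_labels_imp_collision[OF assms(2)] by blast
  then have "card {xs \<in> ?X. \<not> respects_labels p k h xs} \<le> card (\<Union>ii\<in>?pairs. ?E ii)"
    by (intro card_mono finite_subset[OF _ finite_sample_tuples[OF p0]]) auto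
  also have "\<dots> \<le> (\<Sum>ii\<in>?pairs. card (?E ii))"
    using fin by (rule card_UN_le)
  finally have "real (card {xs \<in> ?X. \<not> respects_labels p k h xs}) \<le> (\<Sum>ii\<in>?pairs. real (card (?E ii)))"
    by (simp flip: of_nat_sum)
  also have "\<dots> \<le> real (card ?pairs) * ((real p ^ k) ^ ?s / real p ^ k)"
    using card_term_collisions[OF assms(1)] by (intro sum_bounded_above) auto
  also have "\<dots> \<le> real (length h) ^ 2 * ((real p ^ k) ^ ?s / real p ^ k)"
  proof (rule mult_right_mono)
    have "card ?pairs \<le> card (?P \<times> ?P)"
      by (intro card_mono) (auto simp: finite_proper_entries)
    then have "card ?pairs \<le> length h ^ 2"
      using card_proper_entries_sq_le[of p h] by linarith
    then show "real (card ?pairs) \<le> real (length h) ^ 2"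
      by (simp only: of_nat_le_iff flip: of_nat_power)
  qed simp
  finally show ?thesis by simp
qed

lemma avg_likelihood_le_generic:
  assumes "0 < p" and "p ^ k \<le> M" and "length h \<le> p ^ k" and "faithful p h"
  shows "avg_likelihood p k M h \<le> generic_likelihood p M h"
proof -
  let ?X = "sample_tuples p k (num_samples h)"
  have "card {xs \<in> ?X. respects_labels p k h xs} \<le> card ?X"
    by (intro card_mono finite_sample_tuples assms(1)) auto
  then have "real (card {xs \<in> ?X. respects_labels p k h xs}) / (real p ^ k) ^ num_samples h \<le> 1"
    using assms(1) card_sample_tuples[OF assms(1)] by (simp add: divide_le_eq_1 flip: of_nat_power)
  then have "real (card {xs \<in> ?X. respects_labels p k h xs}) / (real p ^ k) ^ num_samples h / falling_fact M D
      \<le> 1 / falling_fact M D" for D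
    by (rule divide_right_mono) simp
  moreover have D: "card (entry_labels p h) \<le> p ^ k"
    using card_entry_labels_le[of p h] assms(3) by linarith
  ultimately show ?thesis
    unfolding avg_likelihood_eq[OF assms(1,2) D] generic_likelihood_def
    using assms(4) by auto
qed

lemma generic_likelihood_le_avg:
  assumes "prime p" and "p ^ k \<le> M" and "length h \<le> p ^ k" and "faithful p h"
  shows "(1 - real (length h) ^ 2 / real p ^ k) * generic_likelihood p M h \<le> avg_likelihood p k M h"
proof -
  let ?X = "sample_tuples p k (num_samples h)" and ?N = "real p ^ k"
  have p0: "0 < p" using assms(1) prime_gt_0_nat by blast
  have "card ?X = card {xs \<in> ?X. respects_labels p k h xs} + card {xs \<in> ?X. \<not> respects_labels p k h xs}"
    using finite_sample_tuples[OF p0] by (subst card_Un_disjoint[symmetric]) (auto intro: arg_cong[where f=card])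
  then have "real (card ?X) = real (card {xs \<in> ?X. respects_labels p k h xs})
      + real (card {xs \<in> ?X. \<not> respects_labels p k h xs})"
    by simp
  moreover have "real (card ?X) = ?N ^ num_samples h"
    using card_sample_tuples[OF p0] by simp
  ultimately have "?N ^ num_samples h = real (card {xs \<in> ?X. respects_labels p k h xs})
      + real (card {xs \<in> ?X. \<not> respects_labels p k h xs})"
    by simp
  then have "?N ^ num_samples h - real (length h) ^ 2 * ?N ^ num_samples h / ?N
      \<le> real (card {xs \<in> ?X. respects_labels p k h xs})"
    using card_not_respects_labels[OF assms(1,4), of k] by simp
  then have "1 - real (length h) ^ 2 / ?N \<le> real (card {xs \<in> ?X. respects_labels p k h xs}) / ?N ^ num_samples h"
    using p0 by (simp add: field_simps)
  then have "(1 - real (length h) ^ 2 / ?N) / falling_fact M D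
      \<le> real (card {xs \<in> ?X. respects_labels p k h xs}) / ?N ^ num_samples h / falling_fact M D" for D
    by (rule divide_right_mono) simp
  moreover have D: "card (entry_labels p h) \<le> p ^ k"
    using card_entry_labels_le[of p h] assms(3) by linarith
  ultimately show ?thesis
    unfolding avg_likelihood_eq[OF p0 assms(2) D] generic_likelihood_def
    using assms(4) by auto
qed

lemma outcome_mass_avg_likelihood:
  assumes "1 < p"
  shows "outcome_mass A {0..M} (avg_likelihood p k M) Ob n []
     = (\<Sum>\<sigma>\<in>labelings p k M. measure_pmf.prob (exec (relabel \<sigma> (Zp_pow p k)) A n []) Ob)
       / card (labelings p k M)"
proof -
  have p0: "0 < p" using assms by simp
  have avg: "avg_likelihood p k M = (\<lambda>h. \<Sum>\<sigma>\<in>labelings p k M. (1 / card (labelings p k M)) * likelihood p k \<sigma> h)"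
    by (simp add: fun_eq_iff avg_likelihood_def sum_divide_distrib)
  have "outcome_mass A {0..M} (avg_likelihood p k M) Ob n []
      = (\<Sum>\<sigma>\<in>labelings p k M. (1 / card (labelings p k M)) * outcome_mass A {0..M} (likelihood p k \<sigma>) Ob n [])"
    unfolding avg
    by (rule outcome_mass_sum[where B=1]) (use finite_labelings[OF p0] likelihood_bounds[OF p0] in auto)
  also have "\<dots> = (\<Sum>\<sigma>\<in>labelings p k M. (1 / card (labelings p k M))
      * measure_pmf.prob (exec (relabel \<sigma> (Zp_pow p k)) A n []) Ob)"
  proof (intro sum.cong refl)
    fix \<sigma> assume "\<sigma> \<in> labelings p k M"
    note \<sigma> = labelings_props[OF this]
    show "(1 / card (labelings p k M)) * outcome_mass A {0..M} (likelihood p k \<sigma>) Ob n []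
        = (1 / card (labelings p k M)) * measure_pmf.prob (exec (relabel \<sigma> (Zp_pow p k)) A n []) Ob"
      using \<sigma>(3) by (simp add: outcome_mass_likelihood[OF assms \<sigma>(1,2)] likelihood_Nil[OF p0] subset_eq)
  qed
  finally show ?thesis
    by (simp add: sum_divide_distrib)
qed

lemma generic_likelihood_Nil: "generic_likelihood p M [] = 1"
  by (simp add: generic_likelihood_def junk_zero_def entry_labels_def proper_entries_def
      faithful_def falling_fact_def)

lemma outcome_mass_avg_UNIV:
  assumes "1 < p" and "p ^ k \<le> M"
  shows "outcome_mass A {0..M} (avg_likelihood p k M) UNIV n [] = 1"
  using assms card_labelings[of p k M] by (simp add: outcome_mass_avg_likelihood falling_fact_def)

lemma outcome_mass_generic_UNIV:
  assumes "q \<le> M"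
  shows "outcome_mass A {0..M} (generic_likelihood p M) UNIV q [] = 1"
proof -
  have "outcome_mass A {0..M} (generic_likelihood p M) UNIV q [] = generic_likelihood p M []"
  proof (rule outcome_mass_UNIV)
    fix h' :: transcript and a assume "length h' < length [] + q"
    then have "card (entry_labels p h') < M"
      using card_entry_labels_le[of p h'] assms by simp
    then show "(\<Sum>l\<in>{0..M}. generic_likelihood p M (h' @ [(a, l)])) = generic_likelihood p M h'"
      by (rule sum_generic_likelihood_snoc)
  qed
  then show ?thesis by (simp add: generic_likelihood_Nil)
qed

lemma generic_likelihood_unfaithful: "\<not> faithful p h \<Longrightarrow> generic_likelihood p M h = 0"
  by (simp add: generic_likelihood_def)

lemma outcome_mass_faithful_part:
  assumes "prime p" and "p ^ k \<le> M" and "q \<le> p ^ k"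
  defines "G \<equiv> \<lambda>h. if faithful p h then avg_likelihood p k M h else 0"
  shows "outcome_mass A {0..M} G Ob q [] \<le> outcome_mass A {0..M} (generic_likelihood p M) Ob q []"
    and "(1 - real q ^ 2 / real p ^ k) * outcome_mass A {0..M} (generic_likelihood p M) Ob q []
       \<le> outcome_mass A {0..M} G Ob q []"
proof -
  let ?e = "real q ^ 2 / real p ^ k"
  have p0: "0 < p" using assms(1) prime_gt_0_nat by blast
  have "0 \<le> ?e" by simp
  have G1: "\<bar>G h\<bar> \<le> 1" for h
    using avg_likelihood_bounds[OF p0, of k M h] by (auto simp: G_def)
  have G2: "\<bar>G h\<bar> \<le> 1 + ?e" for h
    using G1[of h] \<open>0 \<le> ?e\<close> by linarith
  have gen: "\<bar>generic_likelihood p M h\<bar> \<le> 1" for h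
    using generic_likelihood_bounds[of p M h] by simp
  have "\<bar>(1 - ?e) * generic_likelihood p M h\<bar> \<le> 1 + ?e" for h
    using generic_likelihood_bounds[of p M h] \<open>0 \<le> ?e\<close>
    by (auto simp: abs_mult intro!: order_trans[OF mult_right_le_one_le] abs_le_iff[THEN iffD2])
  show "outcome_mass A {0..M} G Ob q [] \<le> outcome_mass A {0..M} (generic_likelihood p M) Ob q []"
    using assms(2,3) generic_likelihood_bounds[of p M]
    by (intro outcome_mass_mono[OF G1 gen]) (auto simp: G_def avg_likelihood_le_generic[OF p0])
  have "outcome_mass A {0..M} (\<lambda>h. (1 - ?e) * generic_likelihood p M h) Ob q []
      \<le> outcome_mass A {0..M} G Ob q []"
  proof (intro outcome_mass_mono[OF \<open>\<And>h. \<bar>(1 - ?e) * generic_likelihood p M h\<bar> \<le> 1 + ?e\<close> G2])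
    fix h :: transcript assume "length h \<le> length [] + q"
    then have "(1 - ?e) * generic_likelihood p M h \<le> (1 - real (length h) ^ 2 / real p ^ k) * generic_likelihood p M h"
      using generic_likelihood_bounds[of p M h] by (intro mult_right_mono) (auto intro: divide_right_mono)
    moreover have "(1 - real (length h) ^ 2 / real p ^ k) * generic_likelihood p M h \<le> G h"
      using generic_likelihood_le_avg[OF assms(1,2)] \<open>length h \<le> length [] + q\<close> assms(3)
      by (simp add: G_def generic_likelihood_unfaithful)
    ultimately show "(1 - ?e) * generic_likelihood p M h \<le> G h"
      by (rule order_trans)
  qed
  then show "(1 - ?e) * outcome_mass A {0..M} (generic_likelihood p M) Ob q [] \<le> outcome_mass A {0..M} G Ob q []"
    by (simp add: outcome_mass_scale[OF gen])
qed

lemma outcome_mass_avg_split: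
  assumes "0 < p"
  shows "outcome_mass A L (avg_likelihood p k M) Ob n h
     = outcome_mass A L (\<lambda>h. if faithful p h then avg_likelihood p k M h else 0) Ob n h
     + outcome_mass A L (\<lambda>h. if faithful p h then 0 else avg_likelihood p k M h) Ob n h"
proof -
  let ?G = "\<lambda>h. if faithful p h then avg_likelihood p k M h else 0"
  let ?B = "\<lambda>h. if faithful p h then 0 else avg_likelihood p k M h"
  have "avg_likelihood p k M = (\<lambda>h. ?G h + ?B h)" by auto
  moreover have "\<bar>?G h\<bar> \<le> 1" "\<bar>?B h\<bar> \<le> 1" for h
    using avg_likelihood_bounds[OF assms, of k M h] by auto
  ultimately show ?thesis
    using outcome_mass_add[of ?G 1 ?B A L Ob n h] by simp
qed

lemma outcome_mass_unfaithful_part: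
  assumes "prime p" and "p ^ k \<le> M" and "q \<le> p ^ k"
  defines "B \<equiv> \<lambda>h. if faithful p h then 0 else avg_likelihood p k M h"
  shows "0 \<le> outcome_mass A {0..M} B Ob q []" and "outcome_mass A {0..M} B Ob q [] \<le> real q ^ 2 / real p ^ k"
proof -
  let ?m = "\<lambda>\<Lambda> X. outcome_mass A {0..M} \<Lambda> X q []"
  have p1: "1 < p" using assms(1) prime_gt_1_nat by blast
  have B: "\<bar>B h\<bar> \<le> 1" "0 \<le> B h" for h
    using avg_likelihood_bounds[of p k M h] p1 by (auto simp: B_def)
  have "?m (\<lambda>_. 0) Ob \<le> ?m B Ob"
    using B by (intro outcome_mass_mono[where B=1]) auto
  then show "0 \<le> ?m B Ob"
    by (simp add: outcome_mass_zero)
  have "?m B Ob \<le> ?m B UNIV"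
    using B by (intro outcome_mass_mono_set[where B=1]) auto
  also have "\<dots> = 1 - ?m (\<lambda>h. if faithful p h then avg_likelihood p k M h else 0) UNIV"
    using outcome_mass_avg_split[of p A "{0..M}" k M UNIV q "[]"] outcome_mass_avg_UNIV[OF p1 assms(2)] p1
    by (simp add: B_def)
  also have "\<dots> \<le> real q ^ 2 / real p ^ k"
    using outcome_mass_faithful_part(2)[OF assms(1-3), of A UNIV] outcome_mass_generic_UNIV[of q M A p]
      assms(2,3) by simp
  finally show "?m B Ob \<le> real q ^ 2 / real p ^ k" .
qed

lemma outcome_mass_avg_generic_close:
  assumes "prime p" and "p ^ k \<le> M" and "q \<le> p ^ k"
  shows "\<bar>outcome_mass A {0..M} (avg_likelihood p k M) Ob q []
        - outcome_mass A {0..M} (generic_likelihood p M) Ob q []\<bar> \<le> real q ^ 2 / real p ^ k"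
proof -
  let ?T = "outcome_mass A {0..M} (generic_likelihood p M) Ob q []" and ?e = "real q ^ 2 / real p ^ k"
  have gen: "\<bar>generic_likelihood p M h\<bar> \<le> 1" "0 \<le> generic_likelihood p M h" for h
    using generic_likelihood_bounds[of p M h] by auto
  have "?T \<le> outcome_mass A {0..M} (generic_likelihood p M) UNIV q []"
    using gen by (intro outcome_mass_mono_set[where B=1]) auto
  then have "?T \<le> 1"
    using outcome_mass_generic_UNIV[of q M A p] assms(2,3) by simp
  then have "?e * ?T \<le> ?e"
    by (rule mult_left_le) simp
  then have "?T - ?e \<le> (1 - ?e) * ?T"
    by (simp add: algebra_simps)
  then show ?thesis
    using outcome_mass_avg_split[of p A "{0..M}" k M Ob q "[]"] prime_gt_0_nat[OF assms(1)]
      outcome_mass_faithful_part[OF assms, of A Ob] outcome_mass_unfaithful_part[OF assms, of A Ob]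
    by (simp add: abs_le_iff)
qed

lemma decides_with_relabel:
  assumes "prime p" and "decides_with p m A q" and "1 \<le> m" and "k = m - 1 \<or> k = m"
    and "\<sigma> \<in> labelings p k M"
  shows "2 / 3 \<le> measure_pmf.prob (exec (relabel \<sigma> (Zp_pow p k)) A q []) {Some (k = m)}"
proof -
  let ?G = "relabel \<sigma> (Zp_pow p k)"
  have p1: "1 < p" using assms(1) prime_gt_1_nat by blast
  have iso: "?G \<cong> Zp_pow p k"
    using relabel_iso[OF group_Zp_pow labelings_props(1)[OF assms(5)]] .
  then have "?G \<in> group_class p m"
    using group_relabel[OF group_Zp_pow labelings_props(1)[OF assms(5)]] assms(4)
    by (auto simp: group_class_def)
  moreover have "?G \<cong> Zp_pow p m \<longleftrightarrow> k = m"
  proof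
    assume "?G \<cong> Zp_pow p m"
    then have "card (carrier (Zp_pow p k)) = card (carrier (Zp_pow p m))"
      using iso by (metis iso_same_card)
    then show "k = m"
      using p1 by (simp add: card_carrier_Zp_pow)
  qed (use iso in simp)
  ultimately show ?thesis
    using assms(2) by (auto simp: decides_with_def)
qed

lemma card_labelings_pos: "0 < p \<Longrightarrow> p ^ k \<le> M \<Longrightarrow> 0 < card (labelings p k M)"
  by (simp add: card_labelings falling_fact_def)

lemma outcome_mass_avg_correct:
  assumes "prime p" and "decides_with p m A q" and "1 \<le> m" and "k = m - 1 \<or> k = m" and "p ^ k \<le> M"
  shows "2 / 3 \<le> outcome_mass A {0..M} (avg_likelihood p k M) {Some (k = m)} q []"
proof -
  have p1: "1 < p" using assms(1) prime_gt_1_nat by blast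
  have "real (card (labelings p k M)) * (2 / 3) \<le> (\<Sum>\<sigma>\<in>labelings p k M.
      measure_pmf.prob (exec (relabel \<sigma> (Zp_pow p k)) A q []) {Some (k = m)})"
    using decides_with_relabel[OF assms(1-4)] by (intro sum_bounded_below) auto
  then show ?thesis
    using card_labelings_pos[of p k M] p1 assms(5)
    by (simp add: outcome_mass_avg_likelihood[OF p1] field_simps)
qed

lemma outcome_mass_avg_Some_compl:
  assumes "1 < p" and "p ^ k \<le> M"
  shows "outcome_mass A {0..M} (avg_likelihood p k M) {Some (\<not> b)} n []
       \<le> 1 - outcome_mass A {0..M} (avg_likelihood p k M) {Some b} n []"
proof -
  let ?P = "\<lambda>\<sigma> X. measure_pmf.prob (exec (relabel \<sigma> (Zp_pow p k)) A n []) X"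
  have "?P \<sigma> {Some (\<not> b)} \<le> ?P \<sigma> (UNIV - {Some b})" for \<sigma>
    by (rule measure_pmf.finite_measure_mono) auto
  then have "?P \<sigma> {Some (\<not> b)} \<le> 1 - ?P \<sigma> {Some b}" for \<sigma>
    using measure_pmf.prob_compl[of "{Some b}"] by simp
  then have "(\<Sum>\<sigma>\<in>labelings p k M. ?P \<sigma> {Some (\<not> b)}) \<le> (\<Sum>\<sigma>\<in>labelings p k M. 1 - ?P \<sigma> {Some b})"
    by (rule sum_mono)
  then show ?thesis
    using card_labelings_pos[of p k M] assms
    by (simp add: outcome_mass_avg_likelihood[OF assms(1)] sum_subtractf field_simps)
qed

lemma decides_with_queries_sq:
  assumes "prime p" and "2 \<le> m" and "decides_with p m A q"
  shows "real p ^ (m - 1) \<le> 6 * real q ^ 2"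
proof (cases "q \<le> p ^ (m - 1)")
  case False
  then have "real p ^ (m - 1) \<le> real q"
    by (metis nat_le_linear of_nat_le_iff of_nat_power)
  also have "\<dots> \<le> 6 * real q ^ 2"
    by (cases q) (auto simp: power2_eq_square)
  finally show ?thesis .
next
  case True
  define M where "M = p ^ m"
  have p1: "1 < p" using assms(1) prime_gt_1_nat by blast
  have M: "p ^ (m - 1) \<le> M" "p ^ m \<le> M"
    using p1 by (auto simp: M_def intro: power_increasing)
  have "q \<le> p ^ m" using True M(1) by (simp add: M_def)
  let ?m = "\<lambda>k. outcome_mass A {0..M} (avg_likelihood p k M) {Some False} q []"
  let ?T = "outcome_mass A {0..M} (generic_likelihood p M) {Some False} q []"
  have "(m - 1 = m) = False" using assms(2) by simp
  then have "2 / 3 \<le> ?m (m - 1)"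
    using outcome_mass_avg_correct[OF assms(1,3) _ _ M(1)] assms(2) by simp
  moreover have "?m m \<le> 1 / 3"
    using outcome_mass_avg_correct[OF assms(1,3) _ _ M(2)] outcome_mass_avg_Some_compl[OF p1 M(2), of A True q]
      assms(2) by simp
  moreover have "\<bar>?m (m - 1) - ?T\<bar> \<le> real q ^ 2 / real p ^ (m - 1)"
    using outcome_mass_avg_generic_close[OF assms(1) M(1) True] .
  moreover have "\<bar>?m m - ?T\<bar> \<le> real q ^ 2 / real p ^ m"
    using outcome_mass_avg_generic_close[OF assms(1) M(2) \<open>q \<le> p ^ m\<close>] .
  moreover have "real q ^ 2 / real p ^ m \<le> real q ^ 2 / real p ^ (m - 1)"
    using p1 by (intro divide_left_mono power_increasing) auto
  ultimately have "1 / 3 \<le> 2 * (real q ^ 2 / real p ^ (m - 1))"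
    by (simp add: abs_le_iff)
  then show ?thesis
    using p1 by (simp add: field_simps)
qed

theorem mainTheorem15:
  "\<exists>c > (0::real). \<forall>p m (A :: algorithm) q.
     prime p \<longrightarrow> m \<ge> 2 \<longrightarrow> decides_with p m A q \<longrightarrow>
     real q \<ge> c * real p powr ((real m - 1) / 2) / ln (real p)"
proof (intro exI[of _ "ln 2 / 3"] conjI allI impI)
  show "(0::real) < ln 2 / 3" by simp
  fix p m :: nat and A :: algorithm and q :: nat
  assume "prime p" and "2 \<le> m" and "decides_with p m A q"
  have p2: "2 \<le> real p" using prime_ge_2_nat[OF \<open>prime p\<close>] by simp
  have "real m - 1 = real (m - 1)" using \<open>2 \<le> m\<close> by simp
  then have pow: "real p powr (real m - 1) = real p ^ (m - 1)"
    using p2 by (simp only: powr_realpow)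
  have "real p powr ((real m - 1) / 2) = sqrt (real p powr (real m - 1))"
    by (rule powr_half_sqrt_powr) simp
  also have "\<dots> = sqrt (real p ^ (m - 1))"
    by (simp only: pow)
  also have "\<dots> \<le> sqrt ((3 * real q) ^ 2)"
  proof (rule real_sqrt_le_mono)
    have "real p ^ (m - 1) \<le> 6 * real q ^ 2"
      using \<open>prime p\<close> \<open>2 \<le> m\<close> \<open>decides_with p m A q\<close> by (rule decides_with_queries_sq)
    also have "\<dots> \<le> (3 * real q) ^ 2"
      by (simp add: power_mult_distrib)
    finally show "real p ^ (m - 1) \<le> (3 * real q) ^ 2" .
  qed
  also have "\<dots> = 3 * real q" by (subst real_sqrt_abs) simp
  finally have "ln 2 / 3 * real p powr ((real m - 1) / 2) \<le> ln 2 / 3 * (3 * real q)"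
    by (simp add: mult_left_mono)
  moreover have "ln 2 \<le> ln (real p)" using p2 by simp
  ultimately have "ln 2 / 3 * real p powr ((real m - 1) / 2) / ln (real p) \<le> ln 2 / 3 * (3 * real q) / ln 2"
    by (intro frac_le) auto
  then show "ln 2 / 3 * real p powr ((real m - 1) / 2) / ln (real p) \<le> real q" by simp
qed

end
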